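(* Let $\chi:T\to\overline{\mathbf F}_p^\times$ be a smooth character with $\chi\neq\chi^s$. Then $\mathrm{Hom}_P(\mathrm{Ind}_P^G\chi,\mathrm{Ind}_P^G\chi)=\mathrm{Hom}_G(\mathrm{Ind}_P^G\chi,\mathrm{Ind}_P^G\chi)$.
   Context: $F$ non-Archimedean local field of residual characteristic $p$, $G=\mathrm{GL}_2(F)$, $P$ the upper triangular Borel subgroup, $U$ its unipotent radical, $T$ the diagonal torus; characters of $T$ are viewed as characters of $P$ via $P\to P/U\cong T$. $\chi^s(\mathrm{diag}(a,d))=\chi(\mathrm{diag}(d,a))$. $\mathrm{Ind}_P^G\chi$ is the space of locally constant $f:G\to\overline{\mathbf F}_p$ with $f(bg)=\chi(b)f(g)$ for $b\in P$, with $G$ acting by right translation. *)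

theory Defs
  imports "HOL-Analysis.Analysis" "HOL-Computational_Algebra.Polynomial"
begin

text \<open>F is modelled by a field type 'f together with a (multiplicative) absolute value v.\<close>

definition nonarch_local_field :: "('f::field \<Rightarrow> real) \<Rightarrow> nat \<Rightarrow> bool" where
  "nonarch_local_field v p \<longleftrightarrow>
     v 0 = 0 \<and> (\<forall>x. x \<noteq> 0 \<longrightarrow> v x > 0) \<and>
     (\<forall>x y. v (x * y) = v x * v y) \<and>
     (\<forall>x y. v (x + y) \<le> max (v x) (v y)) \<and>
     (\<exists>\<pi>. 0 < v \<pi> \<and> v \<pi> < 1 \<and> (\<forall>x. x \<noteq> 0 \<longrightarrow> (\<exists>n::int. v x = v \<pi> powi n))) \<and>
     (\<forall>s::nat \<Rightarrow> 'f. (\<forall>e>0. \<exists>N. \<forall>m\<ge>N. \<forall>n\<ge>N. v (s m - s n) < e) \<longrightarrow>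
         (\<exists>l. \<forall>e>0. \<exists>N. \<forall>n\<ge>N. v (s n - l) < e)) \<and>
     (\<exists>R. finite R \<and> R \<subseteq> {x. v x \<le> 1} \<and> (\<forall>x. v x \<le> 1 \<longrightarrow> (\<exists>r\<in>R. v (x - r) < 1))) \<and>
     prime p \<and> v (of_nat p) < 1"

definition alg_closure_of_Fp :: "'k::field itself \<Rightarrow> nat \<Rightarrow> bool" where
  "alg_closure_of_Fp _ p \<longleftrightarrow>
     CHAR('k) = p \<and>
     (\<forall>q::'k poly. degree q > 0 \<longrightarrow> (\<exists>x. poly q x = 0)) \<and>
     (\<forall>x::'k. \<exists>q::'k poly. q \<noteq> 0 \<and> (\<forall>i. coeff q i \<in> range of_nat) \<and> poly q x = 0)"

definition GL2 :: "(('f::field)^2^2) set" where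
  "GL2 = {g. det g \<noteq> 0}"

definition Borel :: "(('f::field)^2^2) set" where
  "Borel = {b. det b \<noteq> 0 \<and> b $ 2 $ 1 = 0}"

definition locally_constant_GL2 :: "('f::field \<Rightarrow> real) \<Rightarrow> ('f^2^2 \<Rightarrow> 'k) \<Rightarrow> bool" where
  "locally_constant_GL2 v f \<longleftrightarrow>
     (\<forall>g\<in>GL2. \<exists>e>0. \<forall>h\<in>GL2. (\<forall>i j. v (h $ i $ j - g $ i $ j) < e) \<longrightarrow> f h = f g)"

text \<open>A character of T is given by chi a d = chi(diag(a,d)); only values on F^x \<times> F^x matter.\<close>
definition smooth_char :: "('f::field \<Rightarrow> real) \<Rightarrow> ('f \<Rightarrow> 'f \<Rightarrow> 'k::field) \<Rightarrow> bool" where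
  "smooth_char v chi \<longleftrightarrow>
     (\<forall>a d. a \<noteq> 0 \<and> d \<noteq> 0 \<longrightarrow> chi a d \<noteq> 0) \<and>
     (\<forall>a d a' d'. a \<noteq> 0 \<and> d \<noteq> 0 \<and> a' \<noteq> 0 \<and> d' \<noteq> 0 \<longrightarrow>
        chi (a * a') (d * d') = chi a d * chi a' d') \<and>
     (\<forall>a d. a \<noteq> 0 \<and> d \<noteq> 0 \<longrightarrow> (\<exists>e>0. \<forall>a' d'. a' \<noteq> 0 \<and> d' \<noteq> 0 \<and>
        v (a' - a) < e \<and> v (d' - d) < e \<longrightarrow> chi a' d' = chi a d))"

definition char_swap :: "('f \<Rightarrow> 'f \<Rightarrow> 'k) \<Rightarrow> ('f \<Rightarrow> 'f \<Rightarrow> 'k)" where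
  "char_swap chi = (\<lambda>a d. chi d a)"

definition char_eq_on_T :: "('f::field \<Rightarrow> 'f \<Rightarrow> 'k) \<Rightarrow> ('f \<Rightarrow> 'f \<Rightarrow> 'k) \<Rightarrow> bool" where
  "char_eq_on_T chi \<psi> \<longleftrightarrow> (\<forall>a d. a \<noteq> 0 \<and> d \<noteq> 0 \<longrightarrow> chi a d = \<psi> a d)"

text \<open>Inflation of chi to P via P \<rightarrow> P/U = T.\<close>
definition char_on_P :: "('f \<Rightarrow> 'f \<Rightarrow> 'k) \<Rightarrow> 'f^2^2 \<Rightarrow> 'k" where
  "char_on_P chi b = chi (b $ 1 $ 1) (b $ 2 $ 2)"

text \<open>Functions GL_2(F) \<rightarrow> k, extended by 0 outside GL_2(F).\<close>
definition Ind :: "('f::field \<Rightarrow> real) \<Rightarrow> ('f \<Rightarrow> 'f \<Rightarrow> 'k::field) \<Rightarrow> (('f^2^2) \<Rightarrow> 'k) set" where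
  "Ind v chi = {f. (\<forall>x. x \<notin> GL2 \<longrightarrow> f x = 0) \<and> locally_constant_GL2 v f \<and>
                  (\<forall>b\<in>Borel. \<forall>g\<in>GL2. f (b ** g) = char_on_P chi b * f g)}"

definition right_translate :: "('f::field)^2^2 \<Rightarrow> ('f^2^2 \<Rightarrow> 'k) \<Rightarrow> ('f^2^2 \<Rightarrow> 'k)" where
  "right_translate h f = (\<lambda>x. f (x ** h))"

definition Hom_equiv :: "(('f::field)^2^2) set \<Rightarrow> (('f^2^2) \<Rightarrow> 'k::field) set \<Rightarrow>
     (('f^2^2 \<Rightarrow> 'k) \<Rightarrow> ('f^2^2 \<Rightarrow> 'k)) set" where
  "Hom_equiv H V = {\<phi>.
      (\<forall>f\<in>V. \<phi> f \<in> V) \<and>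
      (\<forall>f\<in>V. \<forall>f'\<in>V. \<phi> (\<lambda>x. f x + f' x) = (\<lambda>x. \<phi> f x + \<phi> f' x)) \<and>
      (\<forall>c. \<forall>f\<in>V. \<phi> (\<lambda>x. c * f x) = (\<lambda>x. c * \<phi> f x)) \<and>
      (\<forall>h\<in>H. \<forall>f\<in>V. \<phi> (right_translate h f) = right_translate h (\<phi> f))}"

end

theory Submission
  imports Defs
begin

text \<open>Let \<open>\<phi>\<close> be a \<open>P\<close>-equivariant endomorphism of \<open>Ind\<^sub>P\<^sup>G \<chi>\<close>. A function in the induced
  representation is determined by its value at \<open>1\<close> and by its restriction \<open>x \<mapsto> f(w n(x))\<close> to
  the big cell \<open>P w U\<close>. Let \<open>e\<close> be the function supported on \<open>P w n(O)\<close> with value \<open>1\<close> on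
  \<open>w n(O)\<close>. Its image \<open>\<phi> e\<close> is invariant under \<open>n(O)\<close> and under dilation by units; dilating
  \<open>e\<close> by \<open>\<pi>\<close> yields a sum of \<open>q\<close> translates of \<open>e\<close>, and \<open>q = 0\<close> in \<open>k\<close>, so \<open>\<phi> e\<close> vanishes
  outside \<open>w n(O)\<close>, and by smoothness also at \<open>1\<close>. Hence \<open>\<phi> e = c e\<close>, and by translating and
  dilating, \<open>\<phi>\<close> acts by \<open>c\<close> on the function of every ball. A function vanishing at \<open>1\<close> has
  compact support in the big cell and is locally constant there, so by compactness of balls it
  is a finite sum of multiples of ball functions, and \<open>\<phi>\<close> acts on it by \<open>c\<close>. Finally, for
  \<open>t\<close> with \<open>t(1) = 1\<close>, the defect \<open>\<phi> t - c t\<close> is \<open>U\<close>-invariant on the big cell; comparing its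
  values near infinity with \<open>\<chi>\<close> shows that it vanishes unless \<open>\<chi> = \<chi>\<^sup>s\<close>. So \<open>\<phi> = c\<close>, which
  commutes with all of \<open>G\<close>.\<close>

section \<open>Non-Archimedean local fields\<close>

locale local_field =
  fixes v :: "'f::field \<Rightarrow> real" and p :: nat
  assumes nonarch_local_field: "nonarch_local_field v p"
begin

lemma v_0 [simp]: "v 0 = 0"
  and v_pos: "x \<noteq> 0 \<Longrightarrow> 0 < v x"
  and v_mult [simp]: "v (x * y) = v x * v y"
  and v_add_le_max: "v (x + y) \<le> max (v x) (v y)"
  using nonarch_local_field unfolding nonarch_local_field_def by auto

lemma v_nonneg [simp]: "0 \<le> v x"
  using v_pos[of x] by (cases "x = 0") auto

lemma v_eq_0_iff [simp]: "v x = 0 \<longleftrightarrow> x = 0"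
  using v_pos[of x] by (cases "x = 0") auto

lemma v_pos_iff [simp]: "0 < v x \<longleftrightarrow> x \<noteq> 0"
  using v_pos[of x] by (cases "x = 0") auto

lemma v_1 [simp]: "v 1 = 1"
proof -
  have "v 1 = v 1 * v 1"
    using v_mult[of 1 1] by (simp only: mult_1)
  moreover have "v 1 \<noteq> 0"
    by simp
  ultimately show ?thesis
    using mult_cancel_left1[of "v 1" "v 1"] by blast
qed

lemma v_minus [simp]: "v (- x) = v x"
proof -
  have "(v (-1))\<^sup>2 = 1"
    using v_mult[of "-1" "-1"] by (simp add: power2_eq_square)
  then have "v (-1) = 1"
    using v_nonneg[of "-1"] by (auto simp: power2_eq_1_iff)
  then show ?thesis
    using v_mult[of "-1" x] by simp
qed

lemma v_minus_commute: "v (x - y) = v (y - x)"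
  by (metis minus_diff_eq v_minus)

lemma v_inverse [simp]: "v (inverse x) = inverse (v x)"
proof (cases "x = 0")
  case False
  then have "v x * v (inverse x) = 1"
    by (metis v_1 v_mult right_inverse)
  then show ?thesis
    by (metis inverse_unique)
qed simp

lemma v_divide [simp]: "v (x / y) = v x / v y"
  by (simp add: divide_inverse)

lemma v_power [simp]: "v (x ^ n) = v x ^ n"
  by (induction n) auto

lemma v_diff_le_max: "v (x - y) \<le> max (v x) (v y)"
  using v_add_le_max[of x "- y"] by simp

lemma v_diff_trans: "v (x - z) \<le> max (v (x - y)) (v (y - z))"
  using v_add_le_max[of "x - y" "y - z"] by simp

lemma v_add_eq_right: "v x < v y \<Longrightarrow> v (x + y) = v y"
  using v_add_le_max[of x y] v_diff_le_max[of "x + y" x] by auto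

lemma v_eq_if_close: "v (y - x) < v x \<Longrightarrow> v y = v x"
  using v_add_eq_right[of "y - x" x] by simp

lemma v_of_nat_le_1: "v (of_nat n) \<le> 1"
proof (induction n)
  case (Suc n)
  then show ?case
    using v_add_le_max[of 1 "of_nat n"] by simp
qed simp

lemma v_of_int_le_1: "v (of_int z) \<le> 1"
  by (metis v_minus v_of_nat_le_1 int_cases of_int_minus of_int_of_nat_eq)

lemma prime_p: "prime p" and v_p_less_1: "v (of_nat p) < 1"
  using nonarch_local_field unfolding nonarch_local_field_def by auto

lemma v_of_int_less_1_iff: "v (of_int z) < 1 \<longleftrightarrow> int p dvd z"
proof
  assume "int p dvd z"
  then obtain m where "z = int p * m" by blast
  then have "v (of_int z) = v (of_nat p) * v (of_int m)"
    by simp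
  also have "\<dots> < 1"
    using v_p_less_1 v_of_int_le_1[of m] mult_left_le[of "v (of_int m)" "v (of_nat p)"] by simp
  finally show "v (of_int z) < 1" .
next
  assume z: "v (of_int z) < 1"
  show "int p dvd z"
  proof (rule ccontr)
    assume "\<not> int p dvd z"
    then have "coprime (int p) z"
      using prime_p by (simp add: prime_imp_coprime)
    then obtain a b where "a * int p + b * z = 1"
      by (metis bezout_int coprime_iff_gcd_eq_1)
    then have "(1::'f) = of_int a * of_nat p + of_int b * of_int z"
      by (metis of_int_1 of_int_add of_int_mult of_int_of_nat_eq)
    then have "1 \<le> max (v (of_int a) * v (of_nat p)) (v (of_int b) * v (of_int z))"
      by (metis v_1 v_mult v_add_le_max)
    moreover have "v (of_int a) * v (of_nat p) < 1" "v (of_int b) * v (of_int z) < 1"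
      using mult_right_mono[OF v_of_int_le_1] v_p_less_1 z by (smt (verit) v_nonneg)+
    ultimately show False
      by simp
  qed
qed

definition uniformizer :: 'f where
  "uniformizer = (SOME \<pi>. 0 < v \<pi> \<and> v \<pi> < 1 \<and> (\<forall>x. x \<noteq> 0 \<longrightarrow> (\<exists>n::int. v x = v \<pi> powi n)))"

abbreviation \<rho> :: real where "\<rho> \<equiv> v uniformizer"

lemma uniformizer: "0 < \<rho>" "\<rho> < 1" "x \<noteq> 0 \<Longrightarrow> \<exists>n::int. v x = \<rho> powi n"
proof -
  have "\<exists>\<pi>. 0 < v \<pi> \<and> v \<pi> < 1 \<and> (\<forall>x. x \<noteq> 0 \<longrightarrow> (\<exists>n::int. v x = v \<pi> powi n))"
    using nonarch_local_field unfolding nonarch_local_field_def by blast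
  from someI_ex[OF this] show "0 < \<rho>" "\<rho> < 1" "x \<noteq> 0 \<Longrightarrow> \<exists>n::int. v x = \<rho> powi n"
    unfolding uniformizer_def[symmetric] by auto
qed

lemma uniformizer_nonzero [simp]: "uniformizer \<noteq> 0"
  using uniformizer(1) by auto

lemma v_le_rho_if_less_1: "v x < 1 \<Longrightarrow> v x \<le> \<rho>"
proof (cases "x = 0")
  case False
  assume x: "v x < 1"
  obtain n where n: "v x = \<rho> powi n"
    using uniformizer(3)[OF False] by blast
  have "1 \<le> n"
  proof (rule ccontr)
    assume "\<not> 1 \<le> n"
    then have "\<rho> powi 0 \<le> \<rho> powi n"
      using uniformizer(1,2) by (intro power_int_decreasing) auto
    then show False
      using x n by simp
  qed
  then have "\<rho> powi n \<le> \<rho> powi 1"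
    using uniformizer(1,2) by (intro power_int_decreasing) auto
  then show ?thesis
    using n by simp
qed (use uniformizer in simp)

lemma v_divide_uniformizer_le_1_iff: "v (x / uniformizer) \<le> 1 \<longleftrightarrow> v x < 1"
  using uniformizer(1,2) v_le_rho_if_less_1[of x] by (auto simp: divide_le_eq)

lemma rho_power_less: "0 < e \<Longrightarrow> \<exists>n. \<rho> ^ n < e"
  using real_arch_pow_inv uniformizer(1,2) by blast

lemma exists_large: "0 < e \<Longrightarrow> \<exists>x. x \<noteq> 0 \<and> v (1 / x) < e \<and> 1 < v x"
proof -
  assume "0 < e"
  then obtain n where n: "\<rho> ^ n < min e 1"
    using rho_power_less[of "min e 1"] by auto
  have "0 < \<rho> ^ n"
    using uniformizer(1) by simp
  then show ?thesis
    using n by (intro exI[of _ "inverse (uniformizer ^ n)"]) (simp add: inverse_eq_divide)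
qed

lemma Cauchy_converges:
  fixes s :: "nat \<Rightarrow> 'f"
  assumes "\<forall>e>0. \<exists>N. \<forall>m\<ge>N. \<forall>n\<ge>N. v (s m - s n) < e"
  shows "\<exists>l. \<forall>e>0. \<exists>N. \<forall>n\<ge>N. v (s n - l) < e"
proof -
  have "\<forall>s::nat \<Rightarrow> 'f. (\<forall>e>0. \<exists>N. \<forall>m\<ge>N. \<forall>n\<ge>N. v (s m - s n) < e) \<longrightarrow>
      (\<exists>l. \<forall>e>0. \<exists>N. \<forall>n\<ge>N. v (s n - l) < e)"
    using nonarch_local_field unfolding nonarch_local_field_def by blast
  then show ?thesis
    using assms by blast
qed

lemma v_diff_le_geometric:
  fixes A :: "nat \<Rightarrow> 'f"
  assumes c: "0 < c" and step: "\<And>n. v (A (Suc n) - A n) \<le> c * \<rho> ^ n" and "n \<le> m"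
  shows "v (A m - A n) \<le> c * \<rho> ^ n"
  using \<open>n \<le> m\<close>
proof (induction m rule: dec_induct)
  case (step m)
  have "c * \<rho> ^ m \<le> c * \<rho> ^ n"
    using step(1) c uniformizer(1,2) by (simp add: power_decreasing)
  then show ?case
    using v_diff_trans[of "A (Suc m)" "A n" "A m"] assms(2)[of m] step(3) by linarith
qed (use c uniformizer(1) in simp)

lemma geometric_Cauchy_limit:
  fixes A :: "nat \<Rightarrow> 'f"
  assumes c: "0 < c" and step: "\<And>n. v (A (Suc n) - A n) \<le> c * \<rho> ^ n"
  obtains l where "\<And>n. v (A n - l) \<le> c * \<rho> ^ n"
proof -
  note tail = v_diff_le_geometric[OF c step]
  have small: "\<exists>N. c * \<rho> ^ N < e" if "0 < e" for e
    using rho_power_less[of "e / c"] that c by (auto simp: mult.commute pos_less_divide_eq)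
  have "\<forall>e>0. \<exists>N. \<forall>m\<ge>N. \<forall>n\<ge>N. v (A m - A n) < e"
  proof (intro allI impI)
    fix e :: real
    assume "0 < e"
    then obtain N where N: "c * \<rho> ^ N < e"
      using small by blast
    have "v (A m - A n) < e" if "N \<le> m" "N \<le> n" for m n
      using tail[of N m] tail[of N n] v_diff_trans[of "A m" "A n" "A N"] v_minus_commute[of "A n" "A N"]
        that N by linarith
    then show "\<exists>N. \<forall>m\<ge>N. \<forall>n\<ge>N. v (A m - A n) < e"
      by blast
  qed
  then obtain l where l: "\<forall>e>0. \<exists>N. \<forall>n\<ge>N. v (A n - l) < e"
    using Cauchy_converges by blast
  have "v (A n - l) \<le> c * \<rho> ^ n" for n
  proof (rule ccontr)
    assume "\<not> v (A n - l) \<le> c * \<rho> ^ n"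
    moreover have "0 \<le> c * \<rho> ^ n"
      using c uniformizer(1) by simp
    ultimately obtain N where N: "\<forall>k\<ge>N. v (A k - l) < v (A n - l)"
      using l by (meson le_less_trans not_le)
    then have "v (A (max N n) - l) < v (A n - l)"
      by simp
    moreover have "v (A n - A (max N n)) \<le> c * \<rho> ^ n"
      using tail[of n "max N n"] v_minus_commute by simp
    ultimately show False
      using v_diff_trans[of "A n" l "A (max N n)"] \<open>\<not> v (A n - l) \<le> c * \<rho> ^ n\<close> by linarith
  qed
  then show thesis
    using that by blast
qed

definition residue_system :: "'f set \<Rightarrow> bool" where
  "residue_system R \<longleftrightarrow> finite R \<and> R \<subseteq> {x. v x \<le> 1} \<and> (\<forall>x. v x \<le> 1 \<longrightarrow> (\<exists>r\<in>R. v (x - r) < 1))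
     \<and> (\<forall>r\<in>R. \<forall>r'\<in>R. v (r - r') < 1 \<longrightarrow> r = r')"

lemma residue_system_exists: "\<exists>R. residue_system R"
proof -
  have "\<exists>R. finite R \<and> R \<subseteq> {x. v x \<le> 1} \<and> (\<forall>x. v x \<le> 1 \<longrightarrow> (\<exists>r\<in>R. v (x - r) < 1))"
    using nonarch_local_field unfolding nonarch_local_field_def by (elim conjE) assumption
  then obtain R where R: "finite R" "R \<subseteq> {x. v x \<le> 1}" "\<forall>x. v x \<le> 1 \<longrightarrow> (\<exists>r\<in>R. v (x - r) < 1)"
    by blast
  define rep where "rep x = (SOME r. r \<in> R \<and> v (x - r) < 1)" for x
  have rep: "rep x \<in> R \<and> v (x - rep x) < 1" if "v x \<le> 1" for x
  proof -
    have "\<exists>r. r \<in> R \<and> v (x - r) < 1"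
      using R(3) that by blast
    then show ?thesis
      unfolding rep_def by (rule someI_ex)
  qed
  have rep_eq: "rep x = rep y" if "v (x - y) < 1" for x y
  proof -
    have "v (x - r) < 1 \<longleftrightarrow> v (y - r) < 1" for r
      using v_diff_trans[of x r y] v_diff_trans[of y r x] that v_minus_commute[of x y] by auto
    then show ?thesis
      unfolding rep_def by simp
  qed
  have "residue_system (rep ` R)"
    unfolding residue_system_def
  proof (intro conjI ballI allI impI)
    show "finite (rep ` R)"
      using R(1) by simp
    show "rep ` R \<subseteq> {x. v x \<le> 1}"
      using R(2) rep by auto
  next
    fix x
    assume "v x \<le> 1"
    then obtain r where r: "r \<in> R" "v (x - r) < 1"
      using R(3) by blast
    moreover have "v r \<le> 1"
      using r(1) R(2) by auto
    ultimately have "v (x - rep r) < 1"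
      using rep[of r] v_diff_trans[of x "rep r" r] by auto
    then show "\<exists>r\<in>rep ` R. v (x - r) < 1"
      using r by blast
  next
    fix r r'
    assume "r \<in> rep ` R" "r' \<in> rep ` R" and close: "v (r - r') < 1"
    then obtain a b where ab: "a \<in> R" "b \<in> R" "r = rep a" "r' = rep b"
      by blast
    then have "v (a - r) < 1" "v (r' - b) < 1"
      using rep[of a] rep[of b] R(2) v_minus_commute[of b] by auto
    then have "v (a - b) < 1"
      using close v_diff_trans[of a b r] v_diff_trans[of r b r'] by auto
    then show "r = r'"
      using ab rep_eq by blast
  qed
  then show ?thesis ..
qed

definition residues :: "'f set" where
  "residues = (SOME R. residue_system R)"

lemma residue_system_residues: "residue_system residues"
  unfolding residues_def using residue_system_exists by (rule someI_ex)

lemma finite_residues: "finite residues"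
  using residue_system_residues by (simp add: residue_system_def)

lemma residue_system_unique:
  assumes "residue_system R" "v x \<le> 1"
  shows "\<exists>!r. r \<in> R \<and> v (x - r) < 1"
proof -
  obtain r where r: "r \<in> R" "v (x - r) < 1"
    using assms unfolding residue_system_def by blast
  have "r' = r" if "r' \<in> R" "v (x - r') < 1" for r'
  proof -
    have "v (r' - r) < 1"
      using v_diff_trans[of r' r x] v_minus_commute[of x r'] that(2) r(2) by simp
    then show ?thesis
      using assms(1) that(1) r(1) unfolding residue_system_def by blast
  qed
  then show ?thesis
    using r by blast
qed

lemma eq_if_v_of_nat_diff_less_1:
  assumes "i < p" "j < p" "v (of_nat i - of_nat j :: 'f) < 1"
  shows "i = j"
proof -
  have "int p dvd int i - int j"
    using assms(3) v_of_int_less_1_iff[of "int i - int j"] by simp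
  moreover have "\<bar>int i - int j\<bar> < int p"
    using assms(1,2) by auto
  ultimately show ?thesis
    using dvd_imp_le_int[of "int i - int j" "int p"] by fastforce
qed

lemma exists_of_nat_v_diff_less_1: "\<exists>j<p. v (of_int z - of_nat j :: 'f) < 1"
proof -
  have "0 < p"
    using prime_p prime_gt_0_nat by blast
  then have "nat (z mod int p) < p" "int p dvd z - int (nat (z mod int p))"
    by (auto simp: nat_less_iff mod_0_imp_dvd mod_diff_right_eq)
  then show ?thesis
    using v_of_int_less_1_iff by (metis of_int_diff of_int_of_nat_eq)
qed

lemma bij_betw_residue_orbit:
  assumes R: "residue_system R" and r: "r \<in> R"
  shows "bij_betw (\<lambda>j. THE s. s \<in> R \<and> v (r + of_nat j - s) < 1) {..<p}
           {s \<in> R. \<exists>z::int. v (r + of_int z - s) < 1}"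
    (is "bij_betw ?f _ _")
proof -
  have rj: "v (r + of_nat j) \<le> 1" for j
    using v_add_le_max[of r "of_nat j"] v_of_nat_le_1[of j] r R by (auto simp: residue_system_def)
  then have f: "?f j \<in> R \<and> v (r + of_nat j - ?f j) < 1" for j
    using theI'[OF residue_system_unique[OF R]] by blast
  show ?thesis
  proof (rule bij_betwI')
    fix i j
    assume ij: "i \<in> {..<p}" "j \<in> {..<p}"
    show "?f i = ?f j \<longleftrightarrow> i = j"
    proof
      assume eq: "?f i = ?f j"
      have "v ((r + of_nat i - ?f i) - (r + of_nat j - ?f j)) < 1"
        using f[of i] f[of j] v_diff_le_max[of "r + of_nat i - ?f i" "r + of_nat j - ?f j"]
        by linarith
      then show "i = j"
        using eq_if_v_of_nat_diff_less_1 ij unfolding eq by simp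
    qed simp
  next
    fix j
    show "?f j \<in> {s \<in> R. \<exists>z::int. v (r + of_int z - s) < 1}"
      using f[of j] by (auto intro!: exI[of _ "int j"])
  next
    fix s
    assume "s \<in> {s \<in> R. \<exists>z::int. v (r + of_int z - s) < 1}"
    then obtain z where s: "s \<in> R" "v (r + of_int z - s) < 1"
      by blast
    obtain j where j: "j < p" "v (of_int z - of_nat j :: 'f) < 1"
      using exists_of_nat_v_diff_less_1 by blast
    have "v ((r + of_int z - s) - (of_int z - of_nat j)) < 1"
      using v_diff_le_max[of "r + of_int z - s" "of_int z - of_nat j"] s(2) j(2) by linarith
    then have "v (r + of_nat j - s) < 1"
      by (simp add: algebra_simps)
    then have "?f j = s"
      using residue_system_unique[OF R rj[of j]] s(1) by auto
    then show "\<exists>j\<in>{..<p}. s = ?f j"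
      using j(1) by auto
  qed
qed

lemma p_dvd_card_residue_system:
  assumes R: "residue_system R"
  shows "p dvd card R"
proof -
  define rel where "rel = {(r, s). r \<in> R \<and> s \<in> R \<and> (\<exists>z::int. v (r + of_int z - s) < 1)}"
  have "equiv R rel"
  proof (rule equivI)
    show "refl_on R rel"
      unfolding rel_def refl_on_def by (auto intro: exI[of _ 0])
    show "sym rel"
      unfolding rel_def sym_def
    proof clarify
      fix r s z
      assume "r \<in> R" "s \<in> R" "v (r + of_int z - s) < 1"
      then show "\<exists>z'::int. v (s + of_int z' - r) < 1"
        using v_minus_commute[of "r + of_int z" s] by (intro exI[of _ "- z"]) (simp add: algebra_simps)
    qed
    show "trans rel"
      unfolding rel_def trans_def
    proof clarify
      fix r s t z z'
      assume "v (r + of_int z - s) < 1" "v (s + of_int z' - t) < 1"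
      then show "\<exists>z''::int. v (r + of_int z'' - t) < 1"
        using v_add_le_max[of "r + of_int z - s" "s + of_int z' - t"]
        by (intro exI[of _ "z + z'"]) (simp add: algebra_simps)
    qed
  qed (auto simp: rel_def)
  moreover have "p dvd card X" if X: "X \<in> R // rel" for X
  proof -
    obtain r where "r \<in> R" "X = rel `` {r}"
      using X by (elim quotientE) blast
    then have "bij_betw (\<lambda>j. THE s. s \<in> R \<and> v (r + of_nat j - s) < 1) {..<p} X"
      using bij_betw_residue_orbit[OF R] by (simp add: rel_def Image_singleton)
    then show ?thesis
      using bij_betw_same_card by fastforce
  qed
  ultimately show ?thesis
    using equiv_imp_dvd_card R unfolding residue_system_def by blast
qed

text \<open>The closed ball of radius \<open>1 / v s\<close> around \<open>a\<close>; parametrizing the radius by a scalar keeps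
  it in the value group.\<close>

definition vball :: "'f \<Rightarrow> 'f \<Rightarrow> 'f set" where
  "vball a s = {x. v ((x - a) * s) \<le> 1}"

lemma mem_vball: "x \<in> vball a s \<longleftrightarrow> v (x - a) * v s \<le> 1"
  by (simp add: vball_def)

lemma vball_mult_unit: "v u = 1 \<Longrightarrow> vball a (s * u) = vball a s"
  by (simp add: mem_vball set_eq_iff)

lemma mem_vball_iff_close:
  assumes "v ((y - x) * s) \<le> 1"
  shows "y \<in> vball a s \<longleftrightarrow> x \<in> vball a s"
proof -
  have "(y - a) * s = (x - a) * s + (y - x) * s"
    by (simp add: algebra_simps)
  then show ?thesis
    using assms v_add_le_max[of "(x - a) * s" "(y - x) * s"]
      v_diff_le_max[of "(y - a) * s" "(y - x) * s"]
    unfolding vball_def by (auto simp del: v_mult)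
qed

lemma vball_recenter:
  assumes "v ((b - a) * s) \<le> 1"
  shows "vball b s = vball a s"
proof -
  have "x \<in> vball b s \<longleftrightarrow> x - b + a \<in> vball a s" for x
    by (simp add: vball_def)
  moreover have "x - b + a \<in> vball a s \<longleftrightarrow> x \<in> vball a s" for x
    using assms v_minus_commute[of b a] by (intro mem_vball_iff_close) simp
  ultimately show ?thesis
    by blast
qed

lemma mem_vball_split_iff:
  "s \<noteq> 0 \<Longrightarrow> x \<in> vball (a + r / s) (s / uniformizer) \<longleftrightarrow> v ((x - a) * s - r) < 1"
proof -
  assume "s \<noteq> 0"
  then have "(x - (a + r / s)) * (s / uniformizer) = ((x - a) * s - r) / uniformizer"
    by (simp add: field_simps)
  then show ?thesis
    unfolding vball_def mem_Collect_eq v_divide_uniformizer_le_1_iff[symmetric] by (simp only:)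
qed

lemma vball_split:
  assumes s: "s \<noteq> 0" and x: "x \<in> vball a s"
  shows "\<exists>r0\<in>residues. x \<in> vball (a + r0 / s) (s / uniformizer) \<and>
    (\<forall>r\<in>residues. x \<in> vball (a + r / s) (s / uniformizer) \<longrightarrow> r = r0)"
proof -
  have "v ((x - a) * s) \<le> 1"
    using x unfolding vball_def by simp
  then have "\<exists>!r. r \<in> residues \<and> v ((x - a) * s - r) < 1"
    by (rule residue_system_unique[OF residue_system_residues])
  then show ?thesis
    unfolding mem_vball_split_iff[OF s] by blast
qed

lemma vball_split_subset:
  assumes s: "s \<noteq> 0" and r: "r \<in> residues"
  shows "vball (a + r / s) (s / uniformizer) \<subseteq> vball a s"
proof
  fix x
  assume "x \<in> vball (a + r / s) (s / uniformizer)"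
  then have "v ((x - a) * s - r) < 1"
    using mem_vball_split_iff[OF s] by blast
  moreover have "v r \<le> 1"
    using r residue_system_residues unfolding residue_system_def by auto
  ultimately show "x \<in> vball a s"
    using v_add_le_max[of "(x - a) * s - r" r] unfolding vball_def by (simp del: v_mult)
qed

lemma sum_vball_split:
  assumes s: "s \<noteq> 0"
  shows "(\<Sum>r\<in>residues. if x \<in> vball (a + r / s) (s / uniformizer) then c else 0) =
    (if x \<in> vball a s then c else (0::'b::comm_monoid_add))"
proof (cases "x \<in> vball a s")
  case True
  then obtain r0 where r0: "r0 \<in> residues" "x \<in> vball (a + r0 / s) (s / uniformizer)"
    and uniq: "\<forall>r\<in>residues. x \<in> vball (a + r / s) (s / uniformizer) \<longrightarrow> r = r0"
    using vball_split[OF s] by blast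
  have "(if x \<in> vball (a + r / s) (s / uniformizer) then c else 0) = (if r = r0 then c else 0)"
    if "r \<in> residues" for r
  proof (cases "r = r0")
    case False
    then have "x \<notin> vball (a + r / s) (s / uniformizer)"
      using uniq that by blast
    then show ?thesis
      using False by simp
  qed (use r0 in simp)
  then have "(\<Sum>r\<in>residues. if x \<in> vball (a + r / s) (s / uniformizer) then c else 0) =
      (\<Sum>r\<in>residues. if r = r0 then c else 0)"
    by (rule sum.cong[OF refl])
  also have "\<dots> = c"
    using r0 residue_system_residues by (simp add: residue_system_def)
  finally show ?thesis
    using True by simp
next
  case False
  then have "x \<notin> vball (a + r / s) (s / uniformizer)" if "r \<in> residues" for r
    using vball_split_subset[OF s that] by blast
  then show ?thesis
    using False by simp
qed

lemma vball_nested_sequence: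
  assumes split: "\<And>a s. s \<noteq> 0 \<Longrightarrow> (\<And>r. r \<in> residues \<Longrightarrow> P (a + r / s) (s / uniformizer)) \<Longrightarrow> P a s"
    and bad: "\<not> P a s" and s: "s \<noteq> 0"
  obtains A where "\<And>n. \<not> P (A n) (s / uniformizer ^ n)"
    and "\<And>n. v (A (Suc n) - A n) \<le> (1 / v s) * \<rho> ^ n"
proof -
  define S where "S n = s / uniformizer ^ n" for n
  have S: "S n \<noteq> 0" "S (Suc n) = S n / uniformizer" "1 / v (S n) = (1 / v s) * \<rho> ^ n" for n
    using s by (simp_all add: S_def)
  have "\<exists>A. \<forall>n. \<not> P (A n) (S n) \<and> v (A (Suc n) - A n) \<le> (1 / v s) * \<rho> ^ n"
  proof (rule dependent_nat_choice)
    show "\<exists>a. \<not> P a (S 0)"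
      using bad by (auto simp: S_def)
  next
    fix b n
    assume "\<not> P b (S n)"
    then have "\<exists>r\<in>residues. \<not> P (b + r / S n) (S n / uniformizer)"
      using split[OF S(1)[of n], of b] by blast
    then obtain r where r: "r \<in> residues" "\<not> P (b + r / S n) (S (Suc n))"
      unfolding S(2) by blast
    have "v r \<le> 1"
      using r(1) residue_system_residues unfolding residue_system_def by auto
    then have "v (r / S n) \<le> 1 / v (S n)"
      by (simp add: divide_right_mono)
    then have "v (b + r / S n - b) \<le> (1 / v s) * \<rho> ^ n"
      by (simp only: S(3) add_diff_cancel_left')
    then show "\<exists>b'. \<not> P b' (S (Suc n)) \<and> v (b' - b) \<le> (1 / v s) * \<rho> ^ n"
      using r(2) by blast
  qed
  then show thesis
    using that unfolding S_def by blast
qed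

text \<open>Compactness of balls, in the form of an induction principle.\<close>

lemma vball_induction:
  assumes split: "\<And>a s. s \<noteq> 0 \<Longrightarrow> (\<And>r. r \<in> residues \<Longrightarrow> P (a + r / s) (s / uniformizer)) \<Longrightarrow> P a s"
    and local: "\<And>l. \<exists>e>0. \<forall>a s. s \<noteq> 0 \<longrightarrow> vball a s \<subseteq> {x. v (x - l) < e} \<longrightarrow> P a s"
    and s: "s \<noteq> 0"
  shows "P a s"
proof (rule ccontr)
  assume bad: "\<not> P a s"
  obtain A where A: "\<And>n. \<not> P (A n) (s / uniformizer ^ n)"
    and step: "\<And>n. v (A (Suc n) - A n) \<le> (1 / v s) * \<rho> ^ n"
    using vball_nested_sequence[of P a s, OF split bad s] by blast
  obtain l where l: "\<And>n. v (A n - l) \<le> (1 / v s) * \<rho> ^ n"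
  proof (rule geometric_Cauchy_limit[OF _ step])
    show "0 < 1 / v s"
      using s by simp
  qed blast
  obtain e where e: "0 < e" "\<forall>a s. s \<noteq> 0 \<longrightarrow> vball a s \<subseteq> {x. v (x - l) < e} \<longrightarrow> P a s"
    using local[of l] by (elim exE conjE) blast
  obtain n where n: "\<rho> ^ n < e * v s"
    using rho_power_less[of "e * v s"] e(1) s by auto
  have "vball (A n) (s / uniformizer ^ n) \<subseteq> {x. v (x - l) < e}"
  proof
    fix x
    assume "x \<in> vball (A n) (s / uniformizer ^ n)"
    then have "v (x - A n) \<le> (1 / v s) * \<rho> ^ n"
      using s uniformizer(1) by (simp add: mem_vball field_simps)
    moreover have "(1 / v s) * \<rho> ^ n < e"
      using n s by (simp add: divide_less_eq mult.commute)
    ultimately show "x \<in> {x. v (x - l) < e}"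
      using l[of n] v_diff_trans[of x l "A n"] by simp
  qed
  moreover have "s / uniformizer ^ n \<noteq> 0"
    using s by simp
  ultimately show False
    using e(2) A[of n] by blast
qed

end

section \<open>Two-by-two matrices\<close>

definition mat2 :: "'a::field \<Rightarrow> 'a \<Rightarrow> 'a \<Rightarrow> 'a \<Rightarrow> 'a^2^2" where
  "mat2 a b c d = (\<chi> i j. if i = 1 then (if j = 1 then a else b) else (if j = 1 then c else d))"

lemma mat2_nth [simp]:
  "mat2 a b c d $ 1 $ 1 = a" "mat2 a b c d $ 1 $ 2 = b"
  "mat2 a b c d $ 2 $ 1 = c" "mat2 a b c d $ 2 $ 2 = d"
  by (simp_all add: mat2_def)

lemma matrix2_eq_iff:
  "(A::'a^2^2) = B \<longleftrightarrow> A$1$1 = B$1$1 \<and> A$1$2 = B$1$2 \<and> A$2$1 = B$2$1 \<and> A$2$2 = B$2$2"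
  by (auto simp: vec_eq_iff forall_2)

lemma matrix2_mult_nth: "((A::'a::field^2^2) ** B) $ i $ j = A$i$1 * B$1$j + A$i$2 * B$2$j"
  by (simp add: matrix_matrix_mult_def sum_2)

lemma mat2_mult [simp]:
  "mat2 a b c d ** mat2 a' b' c' d' =
     mat2 (a * a' + b * c') (a * b' + b * d') (c * a' + d * c') (c * b' + d * d')"
  by (simp add: matrix2_eq_iff matrix2_mult_nth)

lemma det_matrix2: "det (A::'a::field^2^2) = A$1$1 * A$2$2 - A$1$2 * A$2$1"
  by (simp add: det_2)

lemma det_mat2 [simp]: "det (mat2 a b c d) = a * d - b * c"
  by (simp add: det_2)

lemma mat_1_eq_mat2: "mat 1 = mat2 1 0 0 (1::'a::field)"
  by (simp add: matrix2_eq_iff mat_def)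

text \<open>\<open>unip y\<close> is the unipotent element \<open>n(y)\<close> of \<open>U\<close>, and \<open>wn x\<close> is \<open>w n(x)\<close> for the Weyl
  element \<open>w\<close>; the big cell \<open>P w U\<close> is the set of matrices with non-zero lower left entry.\<close>

definition unip :: "'a::field \<Rightarrow> 'a^2^2" where
  "unip y = mat2 1 y 0 1"

definition diag2 :: "'a::field \<Rightarrow> 'a \<Rightarrow> 'a^2^2" where
  "diag2 a d = mat2 a 0 0 d"

definition wn :: "'a::field \<Rightarrow> 'a^2^2" where
  "wn x = mat2 0 1 1 x"

lemma wn_mult_unip: "wn x ** unip y = wn (x + y)"
  by (simp add: wn_def unip_def add.commute)

lemma wn_mult_diag2: "wn x ** diag2 1 d = diag2 d 1 ** wn (x * d)"
  by (simp add: wn_def diag2_def)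

lemma wn_eq_Borel_mult_lower:
  "x \<noteq> 0 \<Longrightarrow> wn x = mat2 (- 1 / x) 1 0 x ** mat2 1 0 (1 / x) 1"
  by (simp add: wn_def matrix2_eq_iff)

lemma Bruhat_decomposition:
  "(g::'a::field^2^2) $ 2 $ 1 \<noteq> 0 \<Longrightarrow>
     g = mat2 (- det g / g$2$1) (g$1$1) 0 (g$2$1) ** wn (g$2$2 / g$2$1)"
  by (simp add: wn_def matrix2_eq_iff det_matrix2 field_simps)

lemma in_GL2_iff: "g \<in> GL2 \<longleftrightarrow> det g \<noteq> 0"
  by (simp add: GL2_def)

lemma in_Borel_iff: "b \<in> Borel \<longleftrightarrow> b$1$1 \<noteq> 0 \<and> b$2$2 \<noteq> 0 \<and> b$2$1 = 0"
  by (auto simp: Borel_def det_matrix2)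

lemma Borel_subset_GL2: "Borel \<subseteq> GL2"
  by (auto simp: Borel_def GL2_def)

lemma GL2_mult: "g \<in> GL2 \<Longrightarrow> h \<in> GL2 \<Longrightarrow> g ** h \<in> GL2"
  by (simp add: GL2_def det_mul)

lemma mult_in_GL2_iff: "h \<in> GL2 \<Longrightarrow> g ** h \<in> GL2 \<longleftrightarrow> g \<in> GL2"
  by (simp add: GL2_def det_mul)

lemma in_Borel_if_lower_left_0: "g \<in> GL2 \<Longrightarrow> g$2$1 = 0 \<Longrightarrow> g \<in> Borel"
  by (simp add: Borel_def GL2_def)

lemma wn_in_GL2 [simp]: "wn x \<in> GL2"
  by (simp add: GL2_def wn_def)

lemma unip_in_Borel [simp]: "unip y \<in> Borel"
  by (simp add: in_Borel_iff unip_def)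

lemma diag2_in_Borel [simp]: "a \<noteq> 0 \<Longrightarrow> d \<noteq> 0 \<Longrightarrow> diag2 a d \<in> Borel"
  by (simp add: in_Borel_iff diag2_def)

lemma mat_1_in_GL2 [simp]: "mat 1 \<in> GL2"
  by (simp add: GL2_def)

lemma unip_in_GL2 [simp]: "unip y \<in> GL2"
  using Borel_subset_GL2 unip_in_Borel by blast

lemma diag2_in_GL2 [simp]: "a \<noteq> 0 \<Longrightarrow> d \<noteq> 0 \<Longrightarrow> diag2 a d \<in> GL2"
  using Borel_subset_GL2 diag2_in_Borel by blast

section \<open>Continuity for the topology of \<open>GL\<^sub>2(F)\<close>\<close>

lemma mult_less_if_less_divide:
  fixes x y M e :: real
  assumes "0 \<le> x" "x < e / M" "0 \<le> y" "y \<le> M" "0 < M"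
  shows "x * y < e"
proof -
  have "x * y \<le> x * M"
    using assms(4,1) by (rule mult_left_mono)
  also have "\<dots> < e / M * M"
    using assms(2,5) by (rule mult_strict_right_mono)
  finally show ?thesis
    using assms(5) by simp
qed

context local_field
begin

lemma v_mult_diff_le: "v (a' * b' - a * b) \<le> max (v (a' - a) * v b') (v a * v (b' - b))"
proof -
  have "a' * b' - a * b = (a' - a) * b' + a * (b' - b)"
    by (simp add: algebra_simps)
  then show ?thesis
    using v_add_le_max[of "(a' - a) * b'" "a * (b' - b)"] by simp
qed

definition v_close :: "real \<Rightarrow> 'f^2^2 \<Rightarrow> 'f^2^2 \<Rightarrow> bool" where
  "v_close e h g \<longleftrightarrow> (\<forall>i j. v (h$i$j - g$i$j) < e)"

definition v_continuous_on :: "('f^2^2) set \<Rightarrow> ('f^2^2 \<Rightarrow> 'f) \<Rightarrow> bool" where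
  "v_continuous_on S \<Phi> \<longleftrightarrow> (\<forall>g\<in>S. \<forall>\<epsilon>>0. \<exists>\<delta>>0. \<forall>h\<in>GL2. v_close \<delta> h g \<longrightarrow> v (\<Phi> h - \<Phi> g) < \<epsilon>)"

definition v_locally_constant_on :: "('f^2^2) set \<Rightarrow> ('f^2^2 \<Rightarrow> 'b) \<Rightarrow> bool" where
  "v_locally_constant_on S F \<longleftrightarrow> (\<forall>g\<in>S. \<exists>e>0. \<forall>h\<in>GL2. v_close e h g \<longrightarrow> F h = F g)"

lemma locally_constant_GL2_iff: "locally_constant_GL2 v f \<longleftrightarrow> v_locally_constant_on GL2 f"
  by (simp add: locally_constant_GL2_def v_locally_constant_on_def v_close_def)

lemma v_close_mono: "v_close e h g \<Longrightarrow> e \<le> e' \<Longrightarrow> v_close e' h g"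
  unfolding v_close_def by (meson less_le_trans)

lemma v_continuous_onD:
  "v_continuous_on S \<Phi> \<Longrightarrow> g \<in> S \<Longrightarrow> 0 < \<epsilon> \<Longrightarrow>
     \<exists>\<delta>>0. \<forall>h\<in>GL2. v_close \<delta> h g \<longrightarrow> v (\<Phi> h - \<Phi> g) < \<epsilon>"
  unfolding v_continuous_on_def by blast

lemma v_continuous_on_nth: "v_continuous_on S (\<lambda>g. g$i$j)"
  unfolding v_continuous_on_def v_close_def by blast

lemma v_continuous_on_add:
  assumes F: "v_continuous_on S F" and G: "v_continuous_on S G"
  shows "v_continuous_on S (\<lambda>g. F g + G g)"
  unfolding v_continuous_on_def
proof (intro ballI allI impI)
  fix g \<epsilon>
  assume g: "g \<in> S" and \<epsilon>: "(0::real) < \<epsilon>"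
  obtain d1 where d1: "0 < d1" "\<forall>h\<in>GL2. v_close d1 h g \<longrightarrow> v (F h - F g) < \<epsilon>"
    using v_continuous_onD[OF F g \<epsilon>] by blast
  obtain d2 where d2: "0 < d2" "\<forall>h\<in>GL2. v_close d2 h g \<longrightarrow> v (G h - G g) < \<epsilon>"
    using v_continuous_onD[OF G g \<epsilon>] by blast
  have "v (F h + G h - (F g + G g)) < \<epsilon>" if "h \<in> GL2" "v_close (min d1 d2) h g" for h
    using that d1 d2 v_close_mono v_add_le_max[of "F h - F g" "G h - G g"]
    by (fastforce simp: algebra_simps)
  then show "\<exists>\<delta>>0. \<forall>h\<in>GL2. v_close \<delta> h g \<longrightarrow> v (F h + G h - (F g + G g)) < \<epsilon>"
    using d1(1) d2(1) by (intro exI[of _ "min d1 d2"]) auto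
qed

lemma v_continuous_on_minus: "v_continuous_on S F \<Longrightarrow> v_continuous_on S (\<lambda>g. - F g)"
  unfolding v_continuous_on_def by (metis minus_diff_minus v_minus)

lemma v_continuous_on_diff:
  "v_continuous_on S F \<Longrightarrow> v_continuous_on S G \<Longrightarrow> v_continuous_on S (\<lambda>g. F g - G g)"
  using v_continuous_on_add[OF _ v_continuous_on_minus, of S F G] by simp

lemma v_continuous_on_mult:
  assumes F: "v_continuous_on S F" and G: "v_continuous_on S G"
  shows "v_continuous_on S (\<lambda>g. F g * G g)"
  unfolding v_continuous_on_def
proof (intro ballI allI impI)
  fix g \<epsilon>
  assume g: "g \<in> S" and \<epsilon>: "(0::real) < \<epsilon>"
  define MF MG where "MF = v (F g) + 1" and "MG = v (G g) + 1"
  have M: "0 < MF" "0 < MG"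
    unfolding MF_def MG_def by (simp_all add: add_nonneg_pos)
  obtain d1 where d1: "0 < d1" "\<forall>h\<in>GL2. v_close d1 h g \<longrightarrow> v (F h - F g) < \<epsilon> / MG"
    using v_continuous_onD[OF F g, of "\<epsilon> / MG"] \<epsilon> M by auto
  obtain d2 where d2: "0 < d2" "\<forall>h\<in>GL2. v_close d2 h g \<longrightarrow> v (G h - G g) < min 1 (\<epsilon> / MF)"
    using v_continuous_onD[OF G g, of "min 1 (\<epsilon> / MF)"] \<epsilon> M by auto
  have "v (F h * G h - F g * G g) < \<epsilon>" if h: "h \<in> GL2" "v_close (min d1 d2) h g" for h
  proof -
    have dF: "v (F h - F g) < \<epsilon> / MG" and dG: "v (G h - G g) < 1" "v (G h - G g) < \<epsilon> / MF"
      using h d1 d2 v_close_mono by auto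
    have "v (G h) \<le> v (G h - G g) \<or> v (G h) \<le> v (G g)"
      using v_add_le_max[of "G h - G g" "G g"] by (simp add: le_max_iff_disj)
    then have "v (G h) \<le> MG"
      using dG(1) v_nonneg[of "G g"] unfolding MG_def by linarith
    then have "v (F h - F g) * v (G h) < \<epsilon>" "v (G h - G g) * v (F g) < \<epsilon>"
      using dF dG(2) M by (auto intro: mult_less_if_less_divide simp: MF_def)
    then show ?thesis
      using v_mult_diff_le[of "F h" "G h" "F g" "G g"] by (simp add: mult.commute)
  qed
  then show "\<exists>\<delta>>0. \<forall>h\<in>GL2. v_close \<delta> h g \<longrightarrow> v (F h * G h - F g * G g) < \<epsilon>"
    using d1(1) d2(1) by (intro exI[of _ "min d1 d2"]) auto
qed

lemma v_continuous_on_inverse: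
  assumes F: "v_continuous_on S F" and nz: "\<And>g. g \<in> S \<Longrightarrow> F g \<noteq> 0"
  shows "v_continuous_on S (\<lambda>g. inverse (F g))"
  unfolding v_continuous_on_def
proof (intro ballI allI impI)
  fix g \<epsilon>
  assume g: "g \<in> S" and \<epsilon>: "(0::real) < \<epsilon>"
  have Fg: "0 < v (F g)"
    using nz[OF g] by simp
  obtain d where d: "0 < d" "\<forall>h\<in>GL2. v_close d h g \<longrightarrow> v (F h - F g) < min (v (F g)) (\<epsilon> * v (F g) * v (F g))"
    using v_continuous_onD[OF F g, of "min (v (F g)) (\<epsilon> * v (F g) * v (F g))"] \<epsilon> Fg by auto
  have "v (inverse (F h) - inverse (F g)) < \<epsilon>" if "h \<in> GL2" "v_close d h g" for h
  proof -
    have close: "v (F h - F g) < v (F g)" "v (F h - F g) < \<epsilon> * v (F g) * v (F g)"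
      using that d by auto
    then have vh: "v (F h) = v (F g)"
      by (intro v_eq_if_close)
    then have "F h \<noteq> 0"
      using Fg by auto
    then have "inverse (F h) - inverse (F g) = - (F h - F g) / (F h * F g)"
      using nz[OF g] by (simp add: field_simps)
    then have "v (inverse (F h) - inverse (F g)) = v (F h - F g) / (v (F g) * v (F g))"
      using vh v_minus_commute[of "F g" "F h"] by simp
    also have "\<dots> < \<epsilon>"
      using close(2) Fg by (simp add: divide_less_eq mult.assoc)
    finally show ?thesis .
  qed
  then show "\<exists>\<delta>>0. \<forall>h\<in>GL2. v_close \<delta> h g \<longrightarrow> v (inverse (F h) - inverse (F g)) < \<epsilon>"
    using d(1) by blast
qed

lemma v_continuous_on_divide:
  "v_continuous_on S F \<Longrightarrow> v_continuous_on S G \<Longrightarrow> (\<And>g. g \<in> S \<Longrightarrow> G g \<noteq> 0) \<Longrightarrow>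
     v_continuous_on S (\<lambda>g. F g / G g)"
  using v_continuous_on_mult[OF _ v_continuous_on_inverse] by (simp add: divide_inverse)

lemma v_continuous_on_det: "v_continuous_on S det"
  unfolding det_matrix2
  by (intro v_continuous_on_diff v_continuous_on_mult v_continuous_on_nth)

lemma v_locally_constant_onD:
  "v_locally_constant_on S F \<Longrightarrow> g \<in> S \<Longrightarrow> \<exists>e>0. \<forall>h\<in>GL2. v_close e h g \<longrightarrow> F h = F g"
  unfolding v_locally_constant_on_def by blast

lemma v_locally_constant_on_comp2:
  assumes F: "v_locally_constant_on S F" and G: "v_locally_constant_on S G"
  shows "v_locally_constant_on S (\<lambda>g. H (F g) (G g))"
  unfolding v_locally_constant_on_def
proof
  fix g
  assume g: "g \<in> S"
  obtain e1 where e1: "0 < e1" "\<forall>h\<in>GL2. v_close e1 h g \<longrightarrow> F h = F g"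
    using v_locally_constant_onD[OF F g] by blast
  obtain e2 where e2: "0 < e2" "\<forall>h\<in>GL2. v_close e2 h g \<longrightarrow> G h = G g"
    using v_locally_constant_onD[OF G g] by blast
  show "\<exists>e>0. \<forall>h\<in>GL2. v_close e h g \<longrightarrow> H (F h) (G h) = H (F g) (G g)"
    using e1 e2 v_close_mono[of "min e1 e2"] by (intro exI[of _ "min e1 e2"]) auto
qed

lemma v_locally_constant_on_if:
  assumes "v_locally_constant_on S P" "v_locally_constant_on {g \<in> S. P g} F"
  shows "v_locally_constant_on S (\<lambda>g. if P g then F g else c)"
  unfolding v_locally_constant_on_def
proof
  fix g
  assume g: "g \<in> S"
  obtain e1 where e1: "0 < e1" "\<forall>h\<in>GL2. v_close e1 h g \<longrightarrow> P h = P g"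
    using v_locally_constant_onD[OF assms(1) g] by blast
  show "\<exists>e>0. \<forall>h\<in>GL2. v_close e h g \<longrightarrow> (if P h then F h else c) = (if P g then F g else c)"
  proof (cases "P g")
    case True
    then obtain e2 where e2: "0 < e2" "\<forall>h\<in>GL2. v_close e2 h g \<longrightarrow> F h = F g"
      using v_locally_constant_onD[OF assms(2)] g by blast
    then show ?thesis
      using e1 v_close_mono[of "min e1 e2"] by (intro exI[of _ "min e1 e2"]) auto
  qed (use e1 in auto)
qed

lemma v_close_mult_right:
  assumes e: "0 < e"
  shows "\<exists>\<delta>>0. \<forall>h'. v_close \<delta> h' g \<longrightarrow> v_close e (h' ** h) (g ** h)"
proof -
  define M where "M = max 1 (max (max (v (h$1$1)) (v (h$1$2))) (max (v (h$2$1)) (v (h$2$2))))"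
  have M: "1 \<le> M" "v (h$k$j) \<le> M" for k j
    unfolding M_def using exhaust_2[of k] exhaust_2[of j] by auto
  have "v_close e (h' ** h) (g ** h)" if h': "v_close (e / M) h' g" for h'
    unfolding v_close_def
  proof (intro allI)
    fix i j
    have summand: "v ((h'$i$k - g$i$k) * h$k$j) < e" for k
      using h'[unfolded v_close_def, rule_format, of i k] M(1) M(2)[of k j]
      by (simp add: mult_less_if_less_divide)
    have "(h' ** h) $ i $ j - (g ** h) $ i $ j = (h'$i$1 - g$i$1) * h$1$j + (h'$i$2 - g$i$2) * h$2$j"
      by (simp add: matrix2_mult_nth algebra_simps)
    then show "v ((h' ** h) $ i $ j - (g ** h) $ i $ j) < e"
      using v_add_le_max[of "(h'$i$1 - g$i$1) * h$1$j" "(h'$i$2 - g$i$2) * h$2$j"] summand[of 1] summand[of 2]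
      by (simp del: v_mult)
  qed
  then show ?thesis
    using e M(1) by (intro exI[of _ "e / M"]) auto
qed

lemma v_locally_constant_on_mult_right:
  assumes f: "v_locally_constant_on GL2 f" and h: "h \<in> GL2"
  shows "v_locally_constant_on GL2 (\<lambda>x. f (x ** h))"
  unfolding v_locally_constant_on_def
proof
  fix g :: "'f^2^2"
  assume "g \<in> GL2"
  then obtain e where e: "0 < e" "\<forall>h'\<in>GL2. v_close e h' (g ** h) \<longrightarrow> f h' = f (g ** h)"
    using v_locally_constant_onD[OF f GL2_mult[OF _ h]] by blast
  obtain \<delta> where "0 < \<delta>" "\<forall>h'. v_close \<delta> h' g \<longrightarrow> v_close e (h' ** h) (g ** h)"
    using v_close_mult_right[OF e(1)] by blast
  then show "\<exists>\<delta>>0. \<forall>h'\<in>GL2. v_close \<delta> h' g \<longrightarrow> f (h' ** h) = f (g ** h)"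
    using e(2) GL2_mult[OF _ h] by blast
qed

lemma v_close_wn: "v (x - y) < e \<Longrightarrow> 0 < e \<Longrightarrow> v_close e (wn x) (wn y)"
  unfolding v_close_def wn_def by (auto simp: forall_2)

end

section \<open>The principal series representation\<close>

locale principal_series = local_field v p
  for v :: "'f::field \<Rightarrow> real" and p +
  fixes chi :: "'f \<Rightarrow> 'f \<Rightarrow> 'k::field"
  assumes smooth_char: "smooth_char v chi"
begin

lemma chi_nonzero: "a \<noteq> 0 \<Longrightarrow> d \<noteq> 0 \<Longrightarrow> chi a d \<noteq> 0"
  and chi_mult: "a \<noteq> 0 \<Longrightarrow> d \<noteq> 0 \<Longrightarrow> a' \<noteq> 0 \<Longrightarrow> d' \<noteq> 0 \<Longrightarrow> chi (a * a') (d * d') = chi a d * chi a' d'"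
  and chi_locally_constant: "a \<noteq> 0 \<Longrightarrow> d \<noteq> 0 \<Longrightarrow>
    \<exists>e>0. \<forall>a' d'. a' \<noteq> 0 \<and> d' \<noteq> 0 \<and> v (a' - a) < e \<and> v (d' - d) < e \<longrightarrow> chi a' d' = chi a d"
  using smooth_char unfolding smooth_char_def by simp_all

lemma chi_1_1 [simp]: "chi 1 1 = 1"
  using chi_mult[of 1 1 1 1] chi_nonzero[of 1 1] by simp

lemma char_eq_swap_if_antidiagonal_trivial:
  assumes "\<And>z. z \<noteq> 0 \<Longrightarrow> chi (1 / z) z = 1"
  shows "char_eq_on_T chi (char_swap chi)"
proof -
  have swap: "chi 1 z = chi z 1" if z: "z \<noteq> 0" for z
  proof -
    have "chi (1 / z) 1 * chi 1 z = chi (1 / z) 1 * chi z 1"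
      using chi_mult[of "1 / z" 1 1 z] chi_mult[of "1 / z" 1 z 1] assms[OF z] z by simp
    then show ?thesis
      using chi_nonzero[of "1 / z" 1] z by simp
  qed
  have "chi a d = chi d a" if "a \<noteq> 0" "d \<noteq> 0" for a d
    using chi_mult[of a 1 1 d] chi_mult[of d 1 1 a] swap[of a] swap[of d] that
    by (simp add: mult.commute)
  then show ?thesis
    unfolding char_eq_on_T_def char_swap_def by blast
qed

lemma chi_comp_locally_constant_on:
  assumes A: "v_continuous_on S A" "\<And>g. g \<in> S \<Longrightarrow> A g \<noteq> 0"
    and D: "v_continuous_on S D" "\<And>g. g \<in> S \<Longrightarrow> D g \<noteq> 0"
  shows "v_locally_constant_on S (\<lambda>g. chi (A g) (D g))"
  unfolding v_locally_constant_on_def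
proof
  fix g
  assume g: "g \<in> S"
  obtain e where e: "0 < e"
    "\<forall>a' d'. a' \<noteq> 0 \<and> d' \<noteq> 0 \<and> v (a' - A g) < e \<and> v (d' - D g) < e \<longrightarrow> chi a' d' = chi (A g) (D g)"
    using chi_locally_constant[OF A(2)[OF g] D(2)[OF g]] by blast
  obtain \<delta>1 where \<delta>1: "0 < \<delta>1" "\<forall>h\<in>GL2. v_close \<delta>1 h g \<longrightarrow> v (A h - A g) < min e (v (A g))"
    using v_continuous_onD[OF A(1) g, of "min e (v (A g))"] e(1) A(2)[OF g] by auto
  obtain \<delta>2 where \<delta>2: "0 < \<delta>2" "\<forall>h\<in>GL2. v_close \<delta>2 h g \<longrightarrow> v (D h - D g) < min e (v (D g))"
    using v_continuous_onD[OF D(1) g, of "min e (v (D g))"] e(1) D(2)[OF g] by auto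
  have "chi (A h) (D h) = chi (A g) (D g)" if "h \<in> GL2" "v_close (min \<delta>1 \<delta>2) h g" for h
  proof -
    have "v_close \<delta>1 h g" "v_close \<delta>2 h g"
      using v_close_mono[OF that(2)] by simp_all
    then have "v (A h - A g) < min e (v (A g))" "v (D h - D g) < min e (v (D g))"
      using that(1) \<delta>1(2) \<delta>2(2) by blast+
    then have "v (A h - A g) < e" "v (A h - A g) < v (A g)" "v (D h - D g) < e" "v (D h - D g) < v (D g)"
      by simp_all
    moreover have "A h \<noteq> 0" "D h \<noteq> 0"
      using v_eq_if_close[OF calculation(2)] v_eq_if_close[OF calculation(4)] A(2)[OF g] D(2)[OF g]
      by (metis v_eq_0_iff)+
    ultimately show ?thesis
      using e(2) by blast
  qed
  then show "\<exists>\<delta>>0. \<forall>h\<in>GL2. v_close \<delta> h g \<longrightarrow> chi (A h) (D h) = chi (A g) (D g)"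
    using \<delta>1(1) \<delta>2(1) by (intro exI[of _ "min \<delta>1 \<delta>2"]) auto
qed

abbreviation V :: "('f^2^2 \<Rightarrow> 'k) set" where
  "V \<equiv> Ind v chi"

lemma Ind_vanishes: "f \<in> V \<Longrightarrow> x \<notin> GL2 \<Longrightarrow> f x = 0"
  and Ind_locally_constant: "f \<in> V \<Longrightarrow> v_locally_constant_on GL2 f"
  and Ind_Borel_mult: "f \<in> V \<Longrightarrow> b \<in> Borel \<Longrightarrow> g \<in> GL2 \<Longrightarrow> f (b ** g) = chi (b$1$1) (b$2$2) * f g"
  unfolding Ind_def char_on_P_def locally_constant_GL2_iff by auto

lemma Ind_memI:
  assumes "\<And>x. x \<notin> GL2 \<Longrightarrow> f x = 0" "v_locally_constant_on GL2 f"
    "\<And>b g. b \<in> Borel \<Longrightarrow> g \<in> GL2 \<Longrightarrow> f (b ** g) = chi (b$1$1) (b$2$2) * f g"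
  shows "f \<in> V"
  using assms unfolding Ind_def char_on_P_def locally_constant_GL2_iff by auto

lemma Ind_on_Borel: "f \<in> V \<Longrightarrow> b \<in> Borel \<Longrightarrow> f b = chi (b$1$1) (b$2$2) * f (mat 1)"
  using Ind_Borel_mult[of f b "mat 1"] by simp

lemma Ind_on_big_cell:
  assumes f: "f \<in> V" and g: "g \<in> GL2" "g$2$1 \<noteq> 0"
  shows "f g = chi (- det g / g$2$1) (g$2$1) * f (wn (g$2$2 / g$2$1))"
proof -
  have "mat2 (- det g / g$2$1) (g$1$1) 0 (g$2$1) \<in> Borel"
    using g by (simp add: in_Borel_iff in_GL2_iff)
  then show ?thesis
    using Ind_Borel_mult[OF f] Bruhat_decomposition[OF g(2)] by (metis mat2_nth(1,4) wn_in_GL2)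
qed

lemma Ind_eqI:
  assumes "f \<in> V" "f' \<in> V" "f (mat 1) = f' (mat 1)" "\<And>x. f (wn x) = f' (wn x)"
  shows "f = f'"
proof
  fix g :: "'f^2^2"
  consider "g \<notin> GL2" | "g \<in> Borel" | "g \<in> GL2" "g$2$1 \<noteq> 0"
    using in_Borel_if_lower_left_0 by blast
  then show "f g = f' g"
    by cases (use assms Ind_vanishes Ind_on_Borel Ind_on_big_cell in metis)+
qed

lemma Ind_zero: "(\<lambda>x. 0) \<in> V"
  by (rule Ind_memI) (auto simp: v_locally_constant_on_def intro: exI[of _ 1])

lemma Ind_add: "f \<in> V \<Longrightarrow> f' \<in> V \<Longrightarrow> (\<lambda>x. f x + f' x) \<in> V"
  by (rule Ind_memI)
    (auto simp: Ind_vanishes Ind_Borel_mult algebra_simps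
      intro: v_locally_constant_on_comp2[OF Ind_locally_constant Ind_locally_constant])

lemma Ind_scale: "f \<in> V \<Longrightarrow> (\<lambda>x. c * f x) \<in> V"
  by (rule Ind_memI)
    (auto simp: Ind_vanishes Ind_Borel_mult algebra_simps
      intro: v_locally_constant_on_comp2[OF Ind_locally_constant Ind_locally_constant])

lemma Ind_diff: "f \<in> V \<Longrightarrow> f' \<in> V \<Longrightarrow> (\<lambda>x. f x - f' x) \<in> V"
  using Ind_add[of f "\<lambda>x. (-1) * f' x"] Ind_scale[of f' "-1"] by simp

lemma Ind_sum: "finite A \<Longrightarrow> (\<And>r. r \<in> A \<Longrightarrow> F r \<in> V) \<Longrightarrow> (\<lambda>x. \<Sum>r\<in>A. F r x) \<in> V"
proof (induction A rule: finite_induct)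
  case (insert r A)
  then show ?case
    using Ind_add[of "F r" "\<lambda>x. \<Sum>r\<in>A. F r x"] by simp
qed (simp add: Ind_zero)

lemma right_translate_Ind: "f \<in> V \<Longrightarrow> h \<in> GL2 \<Longrightarrow> right_translate h f \<in> V"
  unfolding right_translate_def
  by (rule Ind_memI)
    (simp_all add: Ind_vanishes mult_in_GL2_iff v_locally_constant_on_mult_right Ind_locally_constant
      GL2_mult Ind_Borel_mult flip: matrix_mul_assoc)

lemma right_translate_scale: "right_translate h (\<lambda>x. c * f x) = (\<lambda>x. c * right_translate h f x)"
  by (simp add: right_translate_def)

lemma right_translate_unip_wn: "right_translate (unip y) f (wn x) = f (wn (x + y))"
  by (simp add: right_translate_def wn_mult_unip)

lemma right_translate_unip_1: "f \<in> V \<Longrightarrow> right_translate (unip y) f (mat 1) = f (mat 1)"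
  using Ind_on_Borel[of f "unip y"] by (simp add: right_translate_def unip_def in_Borel_iff)

lemma right_translate_diag2_wn:
  "f \<in> V \<Longrightarrow> d \<noteq> 0 \<Longrightarrow> right_translate (diag2 1 d) f (wn x) = chi d 1 * f (wn (x * d))"
  unfolding right_translate_def wn_mult_diag2
  using Ind_Borel_mult[of f "diag2 d 1" "wn (x * d)"] by (simp add: diag2_def in_Borel_iff)

lemma right_translate_diag2_1:
  "f \<in> V \<Longrightarrow> d \<noteq> 0 \<Longrightarrow> right_translate (diag2 1 d) f (mat 1) = chi 1 d * f (mat 1)"
  using Ind_on_Borel[of f "diag2 1 d"] by (simp add: right_translate_def diag2_def in_Borel_iff)

text \<open>Near infinity, \<open>w n(x)\<close> lies in \<open>P\<close> times a small neighbourhood of \<open>1\<close>.\<close>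

lemma Ind_near_infinity:
  assumes f: "f \<in> V"
  shows "\<exists>e>0. \<forall>x. x \<noteq> 0 \<and> v (1 / x) < e \<longrightarrow> f (wn x) = chi (- 1 / x) x * f (mat 1)"
proof -
  obtain e where e: "0 < e" "\<forall>h\<in>GL2. v_close e h (mat 1) \<longrightarrow> f h = f (mat 1)"
    using v_locally_constant_onD[OF Ind_locally_constant[OF f] mat_1_in_GL2] by blast
  have "f (wn x) = chi (- 1 / x) x * f (mat 1)" if x: "x \<noteq> 0" "v (1 / x) < e" for x
  proof -
    have "v_close e (mat2 1 0 (1 / x) 1) (mat 1)"
      using x e(1) unfolding v_close_def mat_1_eq_mat2 by (auto simp: forall_2)
    then have "f (mat2 1 0 (1 / x) 1) = f (mat 1)"
      using e(2) by (simp add: in_GL2_iff)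
    moreover have "mat2 (- 1 / x) 1 0 x \<in> Borel"
      using x by (simp add: in_Borel_iff)
    ultimately show ?thesis
      using Ind_Borel_mult[OF f, of "mat2 (- 1 / x) 1 0 x" "mat2 1 0 (1 / x) 1"]
        wn_eq_Borel_mult_lower[OF x(1)] by (simp add: in_GL2_iff)
  qed
  then show ?thesis
    using e(1) by blast
qed

lemma Ind_wn_locally_constant:
  assumes f: "f \<in> V"
  shows "\<exists>e>0. \<forall>x. v (x - l) < e \<longrightarrow> f (wn x) = f (wn l)"
proof -
  obtain e where e: "0 < e" "\<forall>h\<in>GL2. v_close e h (wn l) \<longrightarrow> f h = f (wn l)"
    using v_locally_constant_onD[OF Ind_locally_constant[OF f] wn_in_GL2] by blast
  have "f (wn x) = f (wn l)" if "v (x - l) < e" for x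
    using e(2) v_close_wn[OF that e(1)] by simp
  then show ?thesis
    using e(1) by blast
qed

lemma Ind_wn_eventually_0:
  assumes f: "f \<in> V" and f1: "f (mat 1) = 0"
  shows "\<exists>s. s \<noteq> 0 \<and> (\<forall>x. x \<notin> vball 0 s \<longrightarrow> f (wn x) = 0)"
proof -
  obtain e where e: "0 < e" "\<forall>x. x \<noteq> 0 \<and> v (1 / x) < e \<longrightarrow> f (wn x) = chi (- 1 / x) x * f (mat 1)"
    using Ind_near_infinity[OF f] by blast
  obtain n where n: "\<rho> ^ n < e"
    using rho_power_less e(1) by blast
  have "f (wn x) = 0" if "x \<notin> vball 0 (uniformizer ^ n)" for x
  proof -
    have "1 < v x * \<rho> ^ n"
      using that by (simp add: mem_vball)
    then have "x \<noteq> 0"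
      by auto
    moreover have "1 / v x < \<rho> ^ n"
      using \<open>1 < v x * \<rho> ^ n\<close> \<open>x \<noteq> 0\<close> by (simp add: divide_less_eq mult.commute)
    then have "v (1 / x) < e"
      using n by simp
    ultimately show ?thesis
      using e(2) f1 by simp
  qed
  then show ?thesis
    by (intro exI[of _ "uniformizer ^ n"]) simp
qed

lemma char_eq_swap_if_eventually_constant:
  assumes e: "0 < e"
    and const: "\<And>x y. x \<noteq> 0 \<Longrightarrow> y \<noteq> 0 \<Longrightarrow> v (1 / x) < e \<Longrightarrow> v (1 / y) < e \<Longrightarrow>
      chi (- 1 / x) x = chi (- 1 / y) y"
  shows "char_eq_on_T chi (char_swap chi)"
proof (rule char_eq_swap_if_antidiagonal_trivial)
  fix z :: 'f
  assume z: "z \<noteq> 0"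
  obtain x where x: "x \<noteq> 0" "v (1 / x) < e * min 1 (v z)"
    using exists_large[of "e * min 1 (v z)"] e z by auto
  have "e * min 1 (v z) \<le> e" "e * min 1 (v z) \<le> e * v z"
    using e by (simp_all add: mult_left_le)
  then have "v (1 / x) < e" "v (1 / x) < e * v z"
    using x(2) by linarith+
  moreover have "v (1 / (x * z)) = v (1 / x) / v z"
    by simp
  ultimately have small: "v (1 / x) < e" "v (1 / (x * z)) < e"
    using z by (simp_all add: pos_divide_less_eq del: v_divide)
  have "chi (- 1 / x) x = chi (- 1 / (x * z)) (x * z)"
    by (rule const) (use x(1) z small in simp_all)
  also have "\<dots> = chi (- 1 / x) x * chi (1 / z) z"
    using chi_mult[of "- 1 / x" x "1 / z" z] x(1) z by simp
  finally show "chi (1 / z) z = 1"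
    using chi_nonzero[of "- 1 / x" x] x(1) by simp
qed

text \<open>This is where \<open>\<chi> \<noteq> \<chi>\<^sup>s\<close> enters: a \<open>U\<close>-invariant function on the big cell that is
  non-zero at \<open>1\<close> would force \<open>\<chi>(x\<^sup>-\<^sup>1, x)\<close> to be constant near infinity.\<close>

lemma Ind_unip_invariant_eq_0:
  assumes f: "f \<in> V" and inv: "\<And>x. f (wn x) = f (wn 0)"
    and ns: "\<not> char_eq_on_T chi (char_swap chi)"
  shows "f = (\<lambda>x. 0)"
proof -
  obtain e where e: "0 < e" "\<forall>x. x \<noteq> 0 \<and> v (1 / x) < e \<longrightarrow> f (wn x) = chi (- 1 / x) x * f (mat 1)"
    using Ind_near_infinity[OF f] by blast
  have f1: "f (mat 1) = 0"
  proof (rule ccontr)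
    assume nz: "f (mat 1) \<noteq> 0"
    have "chi (- 1 / x) x = chi (- 1 / y) y"
      if "x \<noteq> 0" "y \<noteq> 0" "v (1 / x) < e" "v (1 / y) < e" for x y
      using e(2) inv[of x] inv[of y] that nz by (metis mult_cancel_right)
    then show False
      using char_eq_swap_if_eventually_constant e(1) ns by blast
  qed
  obtain x where "x \<noteq> 0" "v (1 / x) < e"
    using exists_large[OF e(1)] by blast
  then have "f (wn y) = 0" for y
    using inv[of x] inv[of y] e(2) f1 by simp
  then show ?thesis
    using Ind_eqI[OF f Ind_zero] f1 by simp
qed

end

section \<open>Functions supported on balls of the big cell\<close>

context local_field
begin

text \<open>By \<open>Bruhat_decomposition\<close>, \<open>in_cell_ball a s g\<close> says that \<open>g \<in> P w n(B)\<close> for the ball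
  \<open>B = vball a s\<close>.\<close>

definition in_cell_ball :: "'f \<Rightarrow> 'f \<Rightarrow> 'f^2^2 \<Rightarrow> bool" where
  "in_cell_ball a s g \<longleftrightarrow> g$2$1 \<noteq> 0 \<and> g$2$2 / g$2$1 \<in> vball a s"

lemma in_cell_ball_wn [simp]: "in_cell_ball a s (wn x) \<longleftrightarrow> x \<in> vball a s"
  by (simp add: in_cell_ball_def wn_def)

lemma not_in_cell_ball_1 [simp]: "\<not> in_cell_ball a s (mat 1)"
  by (simp add: in_cell_ball_def mat_def)

lemma in_cell_ball_Borel_mult: "b \<in> Borel \<Longrightarrow> in_cell_ball a s (b ** g) \<longleftrightarrow> in_cell_ball a s g"
  by (simp add: in_cell_ball_def in_Borel_iff matrix2_mult_nth)

lemma not_in_cell_ball_near_Borel: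
  assumes g: "g \<in> GL2" "g$2$1 = 0" and s: "s \<noteq> 0"
  shows "\<exists>e>0. \<forall>h. v_close e h g \<longrightarrow> \<not> in_cell_ball a s h"
proof -
  have g22: "g$2$2 \<noteq> 0"
    using g by (auto simp: in_GL2_iff det_matrix2)
  define K where "K = max (v a) (1 / v s) + 1"
  have K: "v a < K" "1 / v s < K" "0 < K"
    unfolding K_def using v_nonneg[of a] by linarith+
  have "\<not> in_cell_ball a s h" if h: "v_close (min (v (g$2$2)) (v (g$2$2) / K)) h g" for h
  proof
    assume in_ball: "in_cell_ball a s h"
    then have h21: "h$2$1 \<noteq> 0"
      by (simp add: in_cell_ball_def)
    have d22: "v (h$2$2 - g$2$2) < v (g$2$2)" and d21: "v (h$2$1 - g$2$1) < v (g$2$2) / K"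
      using h unfolding v_close_def by auto
    have c22: "v (h$2$2) = v (g$2$2)"
      using d22 by (rule v_eq_if_close)
    have c21: "v (h$2$1) < v (g$2$2) / K"
      using d21 g(2) by simp
    have "K * v (h$2$1) < v (h$2$2)"
      using c21 K(3) unfolding c22 by (simp add: less_divide_eq mult.commute)
    then have big: "K < v (h$2$2 / h$2$1)"
      using h21 by (simp add: less_divide_eq)
    then have "v (h$2$2 / h$2$1 - a) = v (h$2$2 / h$2$1)"
      using v_add_eq_right[of "- a" "h$2$2 / h$2$1"] K(1) by simp
    then have "1 / v s < v (h$2$2 / h$2$1 - a)"
      using big K(2) by linarith
    then have "1 < v (h$2$2 / h$2$1 - a) * v s"
      using s by (simp add: divide_less_eq)
    then show False
      using in_ball by (simp add: in_cell_ball_def mem_vball)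
  qed
  moreover have "0 < min (v (g$2$2)) (v (g$2$2) / K)"
    using g22 K(3) by simp
  ultimately show ?thesis
    by blast
qed

lemma in_cell_ball_locally_constant:
  assumes s: "s \<noteq> 0"
  shows "v_locally_constant_on GL2 (in_cell_ball a s)"
  unfolding v_locally_constant_on_def
proof
  fix g :: "'f^2^2"
  assume g: "g \<in> GL2"
  show "\<exists>e>0. \<forall>h\<in>GL2. v_close e h g \<longrightarrow> in_cell_ball a s h = in_cell_ball a s g"
  proof (cases "g$2$1 = 0")
    case True
    then show ?thesis
      using not_in_cell_ball_near_Borel[OF g True s, of a] by (auto simp: in_cell_ball_def)
  next
    case False
    let ?S = "{g. g$2$1 \<noteq> 0}"
    have ratio: "v_continuous_on ?S (\<lambda>g. g$2$2 / g$2$1)"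
      by (intro v_continuous_on_divide v_continuous_on_nth) auto
    obtain \<delta>1 where \<delta>1: "0 < \<delta>1"
      "\<forall>h\<in>GL2. v_close \<delta>1 h g \<longrightarrow> v (h$2$2 / h$2$1 - g$2$2 / g$2$1) < 1 / v s"
      using v_continuous_onD[OF ratio, of g "1 / v s"] False s by auto
    have "in_cell_ball a s h = in_cell_ball a s g" if h: "h \<in> GL2" "v_close (min \<delta>1 (v (g$2$1))) h g" for h
    proof -
      have "v (h$2$1 - g$2$1) < v (g$2$1)"
        using h(2) unfolding v_close_def by auto
      then have "v (h$2$1) = v (g$2$1)"
        by (rule v_eq_if_close)
      then have "h$2$1 \<noteq> 0"
        using False by (metis v_eq_0_iff)
      moreover have "v ((h$2$2 / h$2$1 - g$2$2 / g$2$1) * s) \<le> 1"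
        using h \<delta>1 v_close_mono[of "min \<delta>1 (v (g$2$1))"] s by (simp add: less_divide_eq less_imp_le)
      ultimately show ?thesis
        using mem_vball_iff_close False unfolding in_cell_ball_def by blast
    qed
    then show ?thesis
      using \<delta>1(1) False by (intro exI[of _ "min \<delta>1 (v (g$2$1))"]) auto
  qed
qed

definition restrict_ball :: "('f^2^2 \<Rightarrow> 'k) \<Rightarrow> 'f \<Rightarrow> 'f \<Rightarrow> 'f^2^2 \<Rightarrow> 'k::zero" where
  "restrict_ball f a s g = (if in_cell_ball a s g then f g else 0)"

lemma restrict_ball_wn [simp]: "restrict_ball f a s (wn x) = (if x \<in> vball a s then f (wn x) else 0)"
  by (simp add: restrict_ball_def)

lemma restrict_ball_1 [simp]: "restrict_ball f a s (mat 1) = 0"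
  by (simp add: restrict_ball_def)

lemma restrict_ball_split:
  assumes s: "s \<noteq> 0"
  shows "restrict_ball f a s = (\<lambda>g. \<Sum>r\<in>residues. restrict_ball f (a + r / s) (s / uniformizer) g)"
proof
  fix g
  show "restrict_ball f a s g = (\<Sum>r\<in>residues. restrict_ball f (a + r / s) (s / uniformizer) g)"
    using sum_vball_split[OF s, of "g$2$2 / g$2$1" a "f g"]
    by (cases "g$2$1 = 0") (simp_all add: restrict_ball_def in_cell_ball_def)
qed

end

context principal_series
begin

text \<open>The value of \<open>\<chi>\<close> on the Borel factor \<open>b\<close> of \<open>g = b w n(x)\<close>.\<close>

definition bruhat_char :: "'f^2^2 \<Rightarrow> 'k" where
  "bruhat_char g = (if g \<in> GL2 then chi (- det g / g$2$1) (g$2$1) else 0)"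

lemma bruhat_char_wn [simp]: "bruhat_char (wn x) = 1"
  using wn_in_GL2[of x] by (simp add: bruhat_char_def wn_def)

lemma bruhat_char_locally_constant: "v_locally_constant_on {g \<in> GL2. g$2$1 \<noteq> 0} bruhat_char"
proof -
  have "v_locally_constant_on {g \<in> GL2. g$2$1 \<noteq> 0} (\<lambda>g. chi (- det g / g$2$1) (g$2$1))"
    by (rule chi_comp_locally_constant_on)
      (auto intro!: v_continuous_on_divide v_continuous_on_minus v_continuous_on_det
        v_continuous_on_nth simp: in_GL2_iff)
  then show ?thesis
    unfolding v_locally_constant_on_def bruhat_char_def by auto
qed

lemma bruhat_char_Borel_mult:
  assumes b: "b \<in> Borel" and g: "g \<in> GL2" "g$2$1 \<noteq> 0"
  shows "bruhat_char (b ** g) = chi (b$1$1) (b$2$2) * bruhat_char g"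
proof -
  have b': "b$1$1 \<noteq> 0" "b$2$2 \<noteq> 0" "b$2$1 = 0"
    using b by (auto simp: in_Borel_iff)
  have bg: "b ** g \<in> GL2"
    using GL2_mult[OF subsetD[OF Borel_subset_GL2 b] g(1)] .
  have lower: "(b ** g)$2$1 = b$2$2 * g$2$1"
    using b' by (simp add: matrix2_mult_nth)
  have "- det (b ** g) / (b ** g)$2$1 = b$1$1 * (- det g / g$2$1)"
    unfolding det_mul lower using b' g(2) by (simp add: det_matrix2 field_simps)
  moreover have "- det g / g$2$1 \<noteq> 0"
    using g by (simp add: in_GL2_iff)
  ultimately show ?thesis
    using chi_mult[of "b$1$1" "b$2$2" "- det g / g$2$1" "g$2$1"] b' g bg
    by (simp add: bruhat_char_def lower)
qed

definition ball_fun :: "'f \<Rightarrow> 'f \<Rightarrow> 'f^2^2 \<Rightarrow> 'k" where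
  "ball_fun a s = restrict_ball bruhat_char a s"

lemma ball_fun_wn [simp]: "ball_fun a s (wn x) = (if x \<in> vball a s then 1 else 0)"
  by (simp add: ball_fun_def)

lemma ball_fun_1 [simp]: "ball_fun a s (mat 1) = 0"
  by (simp add: ball_fun_def)

lemma ball_fun_mult_unit: "v u = 1 \<Longrightarrow> ball_fun a (s * u) = ball_fun a s"
  by (simp add: ball_fun_def restrict_ball_def in_cell_ball_def vball_mult_unit fun_eq_iff)

lemma ball_fun_recenter: "v ((b - a) * s) \<le> 1 \<Longrightarrow> ball_fun b s = ball_fun a s"
  by (simp add: ball_fun_def restrict_ball_def in_cell_ball_def vball_recenter fun_eq_iff)

lemma ball_fun_split:
  "s \<noteq> 0 \<Longrightarrow> ball_fun a s = (\<lambda>g. \<Sum>r\<in>residues. ball_fun (a + r / s) (s / uniformizer) g)"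
  unfolding ball_fun_def by (rule restrict_ball_split)

lemma restrict_ball_Ind:
  assumes f: "f \<in> V" and s: "s \<noteq> 0"
  shows "restrict_ball f a s \<in> V"
proof (rule Ind_memI)
  show "v_locally_constant_on GL2 (restrict_ball f a s)"
    unfolding restrict_ball_def
    using in_cell_ball_locally_constant[OF s] Ind_locally_constant[OF f]
    by (intro v_locally_constant_on_if) (auto simp: v_locally_constant_on_def)
qed (simp_all add: restrict_ball_def Ind_vanishes[OF f] Ind_Borel_mult[OF f] in_cell_ball_Borel_mult)

lemma ball_fun_Ind:
  assumes s: "s \<noteq> 0"
  shows "ball_fun a s \<in> V"
proof (rule Ind_memI)
  show "v_locally_constant_on GL2 (ball_fun a s)"
    unfolding ball_fun_def restrict_ball_def
    using in_cell_ball_locally_constant[OF s] bruhat_char_locally_constant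
    by (intro v_locally_constant_on_if) (auto simp: v_locally_constant_on_def in_cell_ball_def)
  show "ball_fun a s (b ** g) = chi (b$1$1) (b$2$2) * ball_fun a s g" if "b \<in> Borel" "g \<in> GL2" for b g
  proof (cases "in_cell_ball a s g")
    case True
    then have "g$2$1 \<noteq> 0"
      by (simp add: in_cell_ball_def)
    then show ?thesis
      using True bruhat_char_Borel_mult[OF that] in_cell_ball_Borel_mult[OF that(1)]
      by (simp add: ball_fun_def restrict_ball_def)
  qed (simp add: ball_fun_def restrict_ball_def in_cell_ball_Borel_mult[OF that(1)])
qed (simp add: ball_fun_def restrict_ball_def bruhat_char_def)

lemma right_translate_unip_ball_fun:
  "s \<noteq> 0 \<Longrightarrow> right_translate (unip y) (ball_fun a s) = ball_fun (a - y) s"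
  by (rule Ind_eqI)
    (simp_all add: right_translate_Ind ball_fun_Ind right_translate_unip_wn right_translate_unip_1
      mem_vball algebra_simps)

lemma right_translate_diag2_ball_fun:
  assumes "s \<noteq> 0" "d \<noteq> 0"
  shows "right_translate (diag2 1 d) (ball_fun a s) = (\<lambda>x. chi d 1 * ball_fun (a / d) (s * d) x)"
proof (rule Ind_eqI)
  fix x
  have "(x * d - a) * s = (x - a / d) * (s * d)"
    using assms(2) by (simp add: field_simps)
  then have "x * d \<in> vball a s \<longleftrightarrow> x \<in> vball (a / d) (s * d)"
    by (simp only: vball_def mem_Collect_eq)
  then show "right_translate (diag2 1 d) (ball_fun a s) (wn x) = chi d 1 * ball_fun (a / d) (s * d) (wn x)"
    using assms by (simp add: right_translate_diag2_wn ball_fun_Ind)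
qed (use assms in \<open>simp_all add: right_translate_Ind ball_fun_Ind Ind_scale right_translate_diag2_1\<close>)

lemma restrict_ball_eq_if_constant:
  assumes f: "f \<in> V" and const: "\<And>x. x \<in> vball a s \<Longrightarrow> f (wn x) = \<kappa>"
  shows "restrict_ball f a s = (\<lambda>g. \<kappa> * ball_fun a s g)"
proof
  fix g
  show "restrict_ball f a s g = \<kappa> * ball_fun a s g"
  proof (cases "g \<in> GL2 \<and> in_cell_ball a s g")
    case True
    then show ?thesis
      using Ind_on_big_cell[OF f] const
      by (auto simp: restrict_ball_def ball_fun_def bruhat_char_def in_cell_ball_def)
  next
    case False
    then show ?thesis
      using Ind_vanishes[OF f] by (auto simp: restrict_ball_def ball_fun_def bruhat_char_def)
  qed
qed

lemma restrict_ball_eq_self: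
  assumes f: "f \<in> V" and f1: "f (mat 1) = 0" and s: "s \<noteq> 0"
    and supp: "\<And>x. x \<notin> vball 0 s \<Longrightarrow> f (wn x) = 0"
  shows "restrict_ball f 0 s = f"
  by (rule Ind_eqI) (use f f1 supp restrict_ball_Ind[OF f s] in auto)

end

section \<open>Borel-equivariant endomorphisms are scalars\<close>

locale Borel_endomorphism = principal_series v p chi
  for v :: "'f::field \<Rightarrow> real" and p and chi :: "'f \<Rightarrow> 'f \<Rightarrow> 'k::field" +
  fixes \<phi> :: "('f^2^2 \<Rightarrow> 'k) \<Rightarrow> ('f^2^2 \<Rightarrow> 'k)"
  assumes Borel_hom: "\<phi> \<in> Hom_equiv Borel V"
    and char_p: "CHAR('k) = p"
begin

lemma phi_Ind: "f \<in> V \<Longrightarrow> \<phi> f \<in> V"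
  and phi_add: "f \<in> V \<Longrightarrow> f' \<in> V \<Longrightarrow> \<phi> (\<lambda>x. f x + f' x) = (\<lambda>x. \<phi> f x + \<phi> f' x)"
  and phi_scale: "f \<in> V \<Longrightarrow> \<phi> (\<lambda>x. c * f x) = (\<lambda>x. c * \<phi> f x)"
  and phi_right_translate: "b \<in> Borel \<Longrightarrow> f \<in> V \<Longrightarrow> \<phi> (right_translate b f) = right_translate b (\<phi> f)"
  using Borel_hom unfolding Hom_equiv_def by blast+

lemma phi_diff: "f \<in> V \<Longrightarrow> f' \<in> V \<Longrightarrow> \<phi> (\<lambda>x. f x - f' x) = (\<lambda>x. \<phi> f x - \<phi> f' x)"
  using phi_add[of f "\<lambda>x. (-1) * f' x"] phi_scale[of f' "-1"] Ind_scale[of f' "-1"] by simp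

lemma phi_sum:
  "finite A \<Longrightarrow> (\<And>r. r \<in> A \<Longrightarrow> F r \<in> V) \<Longrightarrow> \<phi> (\<lambda>x. \<Sum>r\<in>A. F r x) = (\<lambda>x. \<Sum>r\<in>A. \<phi> (F r) x)"
proof (induction A rule: finite_induct)
  case empty
  then show ?case
    using phi_scale[OF Ind_zero, of 0] by simp
next
  case (insert r A)
  then show ?case
    using phi_add[of "F r" "\<lambda>x. \<Sum>r\<in>A. F r x"] Ind_sum[of A F] by simp
qed

lemma of_nat_card_residues: "(of_nat (card residues) :: 'k) = 0"
  using p_dvd_card_residue_system[OF residue_system_residues] char_p
  by (simp add: of_nat_eq_0_iff_char_dvd)

definition scalar :: 'k where
  "scalar = \<phi> (ball_fun 0 1) (wn 0)"

lemma phi_unit_ball_dilation: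
  assumes u: "v u = 1"
  shows "\<phi> (ball_fun 0 1) (wn (x * u)) = \<phi> (ball_fun 0 1) (wn x)"
proof -
  have u0: "u \<noteq> 0"
    using u by auto
  have "right_translate (diag2 1 u) (ball_fun 0 1) = (\<lambda>g. chi u 1 * ball_fun 0 1 g)"
    using right_translate_diag2_ball_fun[of 1 u 0] ball_fun_mult_unit[OF u, of 0 1] u0 by simp
  then have "right_translate (diag2 1 u) (\<phi> (ball_fun 0 1)) = (\<lambda>g. chi u 1 * \<phi> (ball_fun 0 1) g)"
    using phi_right_translate[of "diag2 1 u" "ball_fun 0 1"] phi_scale[of "ball_fun 0 1" "chi u 1"]
      ball_fun_Ind u0 by simp
  then have "chi u 1 * \<phi> (ball_fun 0 1) (wn (x * u)) = chi u 1 * \<phi> (ball_fun 0 1) (wn x)"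
    using right_translate_diag2_wn[OF phi_Ind[OF ball_fun_Ind] u0] by (metis one_neq_zero)
  then show ?thesis
    using chi_nonzero[OF u0] by simp
qed

lemma phi_unit_ball_translation:
  assumes y: "v y \<le> 1"
  shows "\<phi> (ball_fun 0 1) (wn (x + y)) = \<phi> (ball_fun 0 1) (wn x)"
proof -
  have "right_translate (unip y) (ball_fun 0 1) = ball_fun 0 1"
    using right_translate_unip_ball_fun[of 1 y 0] ball_fun_recenter[of "- y" 0 1] y by simp
  then have "right_translate (unip y) (\<phi> (ball_fun 0 1)) = \<phi> (ball_fun 0 1)"
    using phi_right_translate[of "unip y" "ball_fun 0 1"] ball_fun_Ind by simp
  then show ?thesis
    using right_translate_unip_wn[of y "\<phi> (ball_fun 0 1)" x] by simp
qed

lemma phi_unit_ball_rescale: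
  "right_translate (diag2 1 uniformizer) (\<phi> (ball_fun 0 1)) =
     (\<lambda>g. chi uniformizer 1 * (\<Sum>r\<in>residues. right_translate (unip (- (r / uniformizer))) (\<phi> (ball_fun 0 1)) g))"
proof -
  have "ball_fun 0 uniformizer = (\<lambda>g. \<Sum>r\<in>residues. right_translate (unip (- (r / uniformizer))) (ball_fun 0 1) g)"
    using ball_fun_split[of uniformizer 0] right_translate_unip_ball_fun[of 1] by simp
  then have rescale: "right_translate (diag2 1 uniformizer) (ball_fun 0 1) =
      (\<lambda>g. chi uniformizer 1 * (\<Sum>r\<in>residues. right_translate (unip (- (r / uniformizer))) (ball_fun 0 1) g))"
    using right_translate_diag2_ball_fun[of 1 uniformizer 0] by simp
  have translates: "right_translate (unip y) (ball_fun 0 1) \<in> V" for y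
    using right_translate_Ind[OF ball_fun_Ind, of 1 "unip y" 0] by simp
  have "right_translate (diag2 1 uniformizer) (\<phi> (ball_fun 0 1))
      = \<phi> (right_translate (diag2 1 uniformizer) (ball_fun 0 1))"
    using phi_right_translate[of _ "ball_fun 0 1"] ball_fun_Ind by simp
  also have "\<dots> = (\<lambda>g. chi uniformizer 1 *
      (\<Sum>r\<in>residues. \<phi> (right_translate (unip (- (r / uniformizer))) (ball_fun 0 1)) g))"
    unfolding rescale using phi_scale[OF Ind_sum[OF finite_residues translates]] phi_sum[OF finite_residues translates] by simp
  also have "\<dots> = (\<lambda>g. chi uniformizer 1 *
      (\<Sum>r\<in>residues. right_translate (unip (- (r / uniformizer))) (\<phi> (ball_fun 0 1)) g))"
    using phi_right_translate[of _ "ball_fun 0 1"] ball_fun_Ind by simp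
  finally show ?thesis .
qed

text \<open>The \<open>q\<close> translates all agree far out, and \<open>q = 0\<close> in \<open>k\<close>.\<close>

lemma phi_unit_ball_outside:
  assumes x: "1 < v x"
  shows "\<phi> (ball_fun 0 1) (wn x) = 0"
proof -
  define z where "z = x / uniformizer"
  have z: "z \<noteq> 0" "1 < v z * \<rho>" "x = z * uniformizer"
    using x uniformizer(1) by (auto simp: z_def)
  have "\<phi> (ball_fun 0 1) (wn (z - r / uniformizer)) = \<phi> (ball_fun 0 1) (wn z)"
    if "r \<in> residues" for r
  proof -
    have "v r \<le> 1"
      using that residue_system_residues by (auto simp: residue_system_def)
    then have "v (- (r / (uniformizer * z))) < v 1"
      using z(2) uniformizer(1) by (simp add: divide_less_eq mult.commute)
    then have "v (1 - r / (uniformizer * z)) = 1"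
      using v_add_eq_right[of "- (r / (uniformizer * z))" 1] by (simp add: algebra_simps)
    moreover have "z - r / uniformizer = z * (1 - r / (uniformizer * z))"
      using z(1) by (simp add: field_simps)
    ultimately show ?thesis
      using phi_unit_ball_dilation by simp
  qed
  then have "(\<Sum>r\<in>residues. right_translate (unip (- (r / uniformizer))) (\<phi> (ball_fun 0 1)) (wn z))
      = of_nat (card residues) * \<phi> (ball_fun 0 1) (wn z)"
    by (simp add: right_translate_unip_wn)
  then have "chi uniformizer 1 * \<phi> (ball_fun 0 1) (wn x) = 0"
    using fun_cong[OF phi_unit_ball_rescale, of "wn z"] of_nat_card_residues z(3)
      right_translate_diag2_wn[OF phi_Ind[OF ball_fun_Ind[OF one_neq_zero, of 0]] uniformizer_nonzero, of z]
    by simp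
  then show ?thesis
    using chi_nonzero[OF uniformizer_nonzero] by simp
qed

lemma phi_unit_ball_1: "\<phi> (ball_fun 0 1) (mat 1) = 0"
proof -
  obtain e where e: "0 < e"
    "\<forall>x. x \<noteq> 0 \<and> v (1 / x) < e \<longrightarrow> \<phi> (ball_fun 0 1) (wn x) = chi (- 1 / x) x * \<phi> (ball_fun 0 1) (mat 1)"
    using Ind_near_infinity[OF phi_Ind[OF ball_fun_Ind[OF one_neq_zero, of 0]]] by blast
  obtain x where x: "x \<noteq> 0" "v (1 / x) < e" "1 < v x"
    using exists_large[OF e(1)] by blast
  have "\<phi> (ball_fun 0 1) (wn x) = chi (- 1 / x) x * \<phi> (ball_fun 0 1) (mat 1)"
    using e(2) x(1,2) by blast
  then have "chi (- 1 / x) x * \<phi> (ball_fun 0 1) (mat 1) = 0"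
    using phi_unit_ball_outside[OF x(3)] by simp
  then show ?thesis
    using chi_nonzero[of "- 1 / x" x] x(1) by simp
qed

lemma phi_unit_ball: "\<phi> (ball_fun 0 1) = (\<lambda>g. scalar * ball_fun 0 1 g)"
proof (rule Ind_eqI)
  fix x
  show "\<phi> (ball_fun 0 1) (wn x) = scalar * ball_fun 0 1 (wn x)"
    using phi_unit_ball_translation[of x 0] phi_unit_ball_outside[of x]
    by (auto simp: scalar_def mem_vball)
qed (simp_all add: phi_Ind ball_fun_Ind Ind_scale phi_unit_ball_1)

lemma phi_ball_fun:
  assumes s: "s \<noteq> 0"
  shows "\<phi> (ball_fun a s) = (\<lambda>g. scalar * ball_fun a s g)"
proof -
  have dil: "right_translate (diag2 1 s) (ball_fun 0 1) = (\<lambda>g. chi s 1 * ball_fun 0 s g)"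
    using right_translate_diag2_ball_fun[of 1 s 0] s by simp
  have "(\<lambda>g. chi s 1 * \<phi> (ball_fun 0 s) g) = \<phi> (right_translate (diag2 1 s) (ball_fun 0 1))"
    using dil phi_scale[of "ball_fun 0 s" "chi s 1"] ball_fun_Ind[OF s] by simp
  also have "\<dots> = (\<lambda>g. chi s 1 * (scalar * ball_fun 0 s g))"
    using phi_right_translate[of "diag2 1 s" "ball_fun 0 1"] s ball_fun_Ind phi_unit_ball dil
    by (simp add: right_translate_scale mult_ac)
  finally have "\<phi> (ball_fun 0 s) = (\<lambda>g. scalar * ball_fun 0 s g)"
    using chi_nonzero[OF s, of 1] by (simp add: fun_eq_iff)
  moreover have "ball_fun a s = right_translate (unip (- a)) (ball_fun 0 s)"
    using right_translate_unip_ball_fun[OF s, of "- a" 0] by simp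
  ultimately show ?thesis
    using phi_right_translate[of "unip (- a)" "ball_fun 0 s"] ball_fun_Ind[OF s]
    by (simp add: right_translate_scale)
qed

lemma phi_restrict_ball_split:
  assumes f: "f \<in> V" and s: "s \<noteq> 0"
    and parts: "\<And>r. r \<in> residues \<Longrightarrow> \<phi> (restrict_ball f (a + r / s) (s / uniformizer)) =
      (\<lambda>g. scalar * restrict_ball f (a + r / s) (s / uniformizer) g)"
  shows "\<phi> (restrict_ball f a s) = (\<lambda>g. scalar * restrict_ball f a s g)"
proof -
  have "\<phi> (restrict_ball f a s) = (\<lambda>g. \<Sum>r\<in>residues. \<phi> (restrict_ball f (a + r / s) (s / uniformizer)) g)"
    unfolding restrict_ball_split[OF s] using s by (intro phi_sum[OF finite_residues] restrict_ball_Ind[OF f]) simp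
  also have "\<dots> = (\<lambda>g. scalar * restrict_ball f a s g)"
    using parts by (simp add: restrict_ball_split[OF s, of f a] sum_distrib_left)
  finally show ?thesis .
qed

text \<open>A function vanishing at \<open>1\<close> is supported on a compact subset of the big cell and is
  locally constant there, so ball induction reduces it to multiples of ball functions.\<close>

lemma phi_vanishing_at_1:
  assumes f: "f \<in> V" and f1: "f (mat 1) = 0"
  shows "\<phi> f = (\<lambda>g. scalar * f g)"
proof -
  obtain s where s: "s \<noteq> 0" "\<forall>x. x \<notin> vball 0 s \<longrightarrow> f (wn x) = 0"
    using Ind_wn_eventually_0[OF f f1] by blast
  have "\<phi> (restrict_ball f 0 s) = (\<lambda>g. scalar * restrict_ball f 0 s g)"
  proof (rule vball_induction[where P = "\<lambda>a s. \<phi> (restrict_ball f a s) = (\<lambda>g. scalar * restrict_ball f a s g)",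
        OF _ _ s(1)])
    fix l
    obtain e where e: "0 < e" "\<forall>x. v (x - l) < e \<longrightarrow> f (wn x) = f (wn l)"
      using Ind_wn_locally_constant[OF f] by blast
    have "\<phi> (restrict_ball f a s) = (\<lambda>g. scalar * restrict_ball f a s g)"
      if "s \<noteq> 0" "vball a s \<subseteq> {x. v (x - l) < e}" for a s
    proof -
      have "restrict_ball f a s = (\<lambda>g. f (wn l) * ball_fun a s g)"
        using that(2) e(2) by (intro restrict_ball_eq_if_constant[OF f]) auto
      then show ?thesis
        using phi_scale[OF ball_fun_Ind] phi_ball_fun that(1) by (simp add: mult_ac)
    qed
    then show "\<exists>e>0. \<forall>a s. s \<noteq> 0 \<longrightarrow> vball a s \<subseteq> {x. v (x - l) < e} \<longrightarrow>
        \<phi> (restrict_ball f a s) = (\<lambda>g. scalar * restrict_ball f a s g)"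
      using e(1) by blast
  qed (rule phi_restrict_ball_split[OF f])
  moreover have "restrict_ball f 0 s = f"
    using restrict_ball_eq_self[OF f f1 s(1)] s(2) by simp
  ultimately show ?thesis
    by simp
qed

lemma phi_defect_unip_invariant:
  assumes t: "t \<in> V"
  shows "\<phi> t (wn (x + y)) - scalar * t (wn (x + y)) = \<phi> t (wn x) - scalar * t (wn x)"
proof -
  have tr: "right_translate (unip y) t \<in> V"
    using right_translate_Ind[OF t] by simp
  have "(\<lambda>g. right_translate (unip y) (\<phi> t) g - \<phi> t g) = \<phi> (\<lambda>g. right_translate (unip y) t g - t g)"
    using phi_diff[OF tr t] phi_right_translate[OF unip_in_Borel t] by simp
  also have "\<dots> = (\<lambda>g. scalar * (right_translate (unip y) t g - t g))"
    using phi_vanishing_at_1 Ind_diff[OF tr t] right_translate_unip_1[OF t] by simp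
  finally show ?thesis
    using fun_cong[of _ _ "wn x"] by (fastforce simp: right_translate_unip_wn algebra_simps)
qed

lemma phi_eq_scalar:
  assumes ns: "\<not> char_eq_on_T chi (char_swap chi)" and f: "f \<in> V"
  shows "\<phi> f = (\<lambda>g. scalar * f g)"
proof (cases "\<exists>t\<in>V. t (mat 1) \<noteq> 0")
  case False
  then show ?thesis
    using phi_vanishing_at_1 f by blast
next
  case True
  then obtain t0 where t0: "t0 \<in> V" "t0 (mat 1) \<noteq> 0"
    by blast
  define t where "t = (\<lambda>x. inverse (t0 (mat 1)) * t0 x)"
  have t: "t \<in> V" "t (mat 1) = 1"
    unfolding t_def using Ind_scale[OF t0(1)] t0(2) by auto
  have "(\<lambda>x. \<phi> t x - scalar * t x) = (\<lambda>x. 0)"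
    using Ind_diff[OF phi_Ind[OF t(1)] Ind_scale[OF t(1)]] phi_defect_unip_invariant[OF t(1), of 0] ns
    by (intro Ind_unip_invariant_eq_0) auto
  then have phi_t: "\<phi> t = (\<lambda>x. scalar * t x)"
    by (simp add: fun_eq_iff)
  define f0 where "f0 = (\<lambda>x. f x - f (mat 1) * t x)"
  have f0: "f0 \<in> V" "f0 (mat 1) = 0"
    unfolding f0_def using Ind_diff[OF f Ind_scale[OF t(1)]] t(2) by auto
  have "\<phi> f = \<phi> (\<lambda>x. f (mat 1) * t x + f0 x)"
    by (simp add: f0_def)
  also have "\<dots> = (\<lambda>x. f (mat 1) * (scalar * t x) + scalar * f0 x)"
    using phi_add[OF Ind_scale[OF t(1)] f0(1)] phi_scale[OF t(1)] phi_t phi_vanishing_at_1[OF f0] by simp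
  also have "\<dots> = (\<lambda>x. scalar * f x)"
    by (simp add: f0_def algebra_simps)
  finally show ?thesis .
qed

lemma GL2_equivariant:
  assumes ns: "\<not> char_eq_on_T chi (char_swap chi)"
  shows "\<phi> \<in> Hom_equiv GL2 V"
proof -
  have "\<phi> (right_translate h f) = right_translate h (\<phi> f)" if "h \<in> GL2" "f \<in> V" for h f
    using phi_eq_scalar[OF ns] right_translate_Ind[OF that(2,1)] that(2) by (simp add: right_translate_scale)
  then show ?thesis
    using Borel_hom unfolding Hom_equiv_def by blast
qed

end

theorem corollary5p3:
  fixes v :: "'f::field \<Rightarrow> real" and p :: nat and chi :: "'f \<Rightarrow> 'f \<Rightarrow> 'k::field"
  assumes "nonarch_local_field v p"
    and "alg_closure_of_Fp TYPE('k) p"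
    and "smooth_char v chi"
    and "\<not> char_eq_on_T chi (char_swap chi)"
  shows "Hom_equiv Borel (Ind v chi) = Hom_equiv GL2 (Ind v chi)"
proof -
  interpret principal_series v p chi
    using assms(1,3) by unfold_locales
  have char_p: "CHAR('k) = p"
    using assms(2) by (simp add: alg_closure_of_Fp_def)
  show ?thesis
  proof
    show "Hom_equiv GL2 V \<subseteq> Hom_equiv Borel V"
      using Borel_subset_GL2 unfolding Hom_equiv_def by blast
    show "Hom_equiv Borel V \<subseteq> Hom_equiv GL2 V"
    proof
      fix \<phi>
      assume "\<phi> \<in> Hom_equiv Borel V"
      then interpret Borel_endomorphism v p chi \<phi>
        using char_p by unfold_locales
      show "\<phi> \<in> Hom_equiv GL2 V"
        using GL2_equivariant assms(4) .
    qed
  qed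
qed

end
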